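(* Fix integers $N,d\ge1$, a function $v:\{0,1\}^N\to\{0,1\}$ and non-negative weights $(q^{(a)}_{\mathbf{x}})$, defined for $a=v(\mathbf{x})$, with $\sum_{\mathbf{x}}q^{(v(\mathbf{x}))}_{\mathbf{x}}=1$. For a density operator $\rho$ on $\mathbb{C}^N\otimes\mathbb{C}^d$ and a family of controlled unitaries $U_{\mathbf{x}}=\sum_{j=1}^N|j\rangle\langle j|\otimes U_j^{(x_j)}$ (with arbitrary unitaries $U_j^{(0)},U_j^{(1)}$ on $\mathbb{C}^d$), let $$P_W(\rho,U_{\mathbf{x}})=\max_{\{\Pi_0,\Pi_1\}}\Big(\sum_{v(\mathbf{x})=1}q^{(1)}_{\mathbf{x}}\mathrm{Tr}[\Pi_1U_{\mathbf{x}}\rho U_{\mathbf{x}}^\dagger]+\sum_{v(\mathbf{x})=0}q^{(0)}_{\mathbf{x}}\mathrm{Tr}[\Pi_0U_{\mathbf{x}}\rho U_{\mathbf{x}}^\dagger]\Big),$$ the maximum taken over two-outcome POVMs $\{\Pi_0,\Pi_1\}$ on $\mathbb{C}^N\otimes\mathbb{C}^d$. Then the maximum of $P_W(\rho,U_{\mathbf{x}})$ over all such pairs $(\rho,U_{\mathbf{x}})$ can be obtained by a pair of the form $\rho=|\psi\rangle\langle\psi|$ with $|\psi\rangle=\sum_{i=1}^N\sqrt{p_i}\,|i\rangle|\chi\rangle$ for some unit vector $|\chi\rangle\in\mathbb{C}^d$ and some $p_i\ge0$ with $\sum_ip_i=1$, and $U_{\mathbf{x}}=\sum_{i=1}^N|i\rangle\langle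 i|\otimes (U_i)^{x_i}$ for some list of unitaries $(U_1,\dots,U_N)$ on $\mathbb{C}^d$ (so the unitary applied at location $i$ is the identity when $x_i=0$ and $U_i$ when $x_i=1$).
   Context: $\{|1\rangle,\dots,|N\rangle\}$ is the standard orthonormal basis of $\mathbb{C}^N$, modeling $N$ spatial paths of a single particle with a $d$-dimensional internal degree of freedom; bits $x_j$ control the local unitary applied on path $j$. *)

theory Defs
  imports Complex_Main "Jordan_Normal_Form.Matrix"
begin

text \<open>Finite-dimensional quantum notions on complex matrices (JNF 'complex mat').
  The space C^N (x) C^d is C^(N*d), basis vector |j>|a> (j<N, a<d) being index j*d + a.\<close>

definition adj :: "complex mat \<Rightarrow> complex mat" where
  "adj A = mat (dim_col A) (dim_row A) (\<lambda>(i,j). cnj (A $$ (j,i)))"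

definition tr :: "complex mat \<Rightarrow> complex" where
  "tr A = (\<Sum>i<dim_row A. A $$ (i,i))"

definition psd :: "nat \<Rightarrow> complex mat \<Rightarrow> bool" where
  "psd n A \<longleftrightarrow> A \<in> carrier_mat n n \<and>
     (\<forall>w \<in> carrier_vec n. let z = (\<Sum>i<n. cnj (w $ i) * (A *\<^sub>v w) $ i) in Im z = 0 \<and> Re z \<ge> 0)"

definition density :: "nat \<Rightarrow> complex mat \<Rightarrow> bool" where
  "density n \<rho> \<longleftrightarrow> psd n \<rho> \<and> tr \<rho> = 1"

definition unitary_mat :: "nat \<Rightarrow> complex mat \<Rightarrow> bool" where
  "unitary_mat d U \<longleftrightarrow> U \<in> carrier_mat d d \<and> adj U * U = 1\<^sub>m d \<and> U * adj U = 1\<^sub>m d"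

definition povm2 :: "nat \<Rightarrow> complex mat \<Rightarrow> complex mat \<Rightarrow> bool" where
  "povm2 n P0 P1 \<longleftrightarrow> psd n P0 \<and> psd n P1 \<and> P0 + P1 = 1\<^sub>m n"

text \<open>Bit strings x in {0,1}^N, as boolean lists of length N (True = bit 1).\<close>
definition bitstrings :: "nat \<Rightarrow> bool list set" where
  "bitstrings N = {xs. length xs = N}"

text \<open>Controlled unitary U_x = sum_j |j><j| (x) Us j (x_j), where Us j b is U_j^(b).\<close>
definition ctrl :: "nat \<Rightarrow> nat \<Rightarrow> (nat \<Rightarrow> bool \<Rightarrow> complex mat) \<Rightarrow> bool list \<Rightarrow> complex mat" where
  "ctrl N d Us x = mat (N*d) (N*d) (\<lambda>(r,c).
     if r div d = c div d then Us (r div d) (x ! (r div d)) $$ (r mod d, c mod d) else 0)"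

text \<open>Winning probability for a fixed POVM; v x = True means v(x) = 1.\<close>
definition win_prob :: "nat \<Rightarrow> nat \<Rightarrow> (bool list \<Rightarrow> bool) \<Rightarrow> (bool list \<Rightarrow> real) \<Rightarrow>
    complex mat \<Rightarrow> (nat \<Rightarrow> bool \<Rightarrow> complex mat) \<Rightarrow> complex mat \<Rightarrow> complex mat \<Rightarrow> real" where
  "win_prob N d v q \<rho> Us P0 P1 =
     Re (\<Sum>x\<in>bitstrings N. complex_of_real (q x) *
          tr ((if v x then P1 else P0) * (ctrl N d Us x * \<rho> * adj (ctrl N d Us x))))"

definition P_W :: "nat \<Rightarrow> nat \<Rightarrow> (bool list \<Rightarrow> bool) \<Rightarrow> (bool list \<Rightarrow> real) \<Rightarrow>
    complex mat \<Rightarrow> (nat \<Rightarrow> bool \<Rightarrow> complex mat) \<Rightarrow> real" where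
  "P_W N d v q \<rho> Us = Sup {win_prob N d v q \<rho> Us P0 P1 | P0 P1. povm2 (N*d) P0 P1}"

definition proj :: "complex vec \<Rightarrow> complex mat" where
  "proj \<psi> = mat (dim_vec \<psi>) (dim_vec \<psi>) (\<lambda>(i,j). \<psi> $ i * cnj (\<psi> $ j))"

text \<open>|psi> = sum_i sqrt(p_i) |i>|chi>.\<close>
definition prod_state :: "nat \<Rightarrow> nat \<Rightarrow> (nat \<Rightarrow> real) \<Rightarrow> complex vec \<Rightarrow> complex vec" where
  "prod_state N d p \<chi> = vec (N*d) (\<lambda>r. complex_of_real (sqrt (p (r div d))) * \<chi> $ (r mod d))"

end

theory Submission
  imports Defs "HOL-Analysis.Function_Topology" "HOL-Analysis.Elementary_Metric_Spaces"
begin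

section \<open>Matrices, adjoints and quadratic forms\<close>

lemma index_mult_mat_vec_sum:
  "A \<in> carrier_mat n m \<Longrightarrow> w \<in> carrier_vec m \<Longrightarrow> i < n \<Longrightarrow>
   (A *\<^sub>v w) $ i = (\<Sum>k<m. A $$ (i,k) * w $ k)"
  by (simp add: scalar_prod_def atLeast0LessThan)

lemma index_mult_mat_sum:
  "A \<in> carrier_mat n m \<Longrightarrow> B \<in> carrier_mat m l \<Longrightarrow> i < n \<Longrightarrow> j < l \<Longrightarrow>
   (A * B) $$ (i,j) = (\<Sum>k<m. A $$ (i,k) * B $$ (k,j))"
  by (simp add: scalar_prod_def atLeast0LessThan)

lemma sum_delta_mult_left: "a < (n::nat) \<Longrightarrow> (\<Sum>c<n. of_bool (a = c) * f c) = (f a :: complex)"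
  by simp

lemma sum_delta_mult_right: "b < (n::nat) \<Longrightarrow> (\<Sum>c<n. f c * of_bool (c = b)) = (f b :: complex)"
  by simp

lemma adj_dims [simp]: "dim_row (adj A) = dim_col A" "dim_col (adj A) = dim_row A"
  unfolding adj_def by simp_all

lemma adj_carrier [simp]: "A \<in> carrier_mat n m \<Longrightarrow> adj A \<in> carrier_mat m n"
  unfolding carrier_mat_def by simp

lemma index_adj [simp]: "i < dim_col A \<Longrightarrow> j < dim_row A \<Longrightarrow> adj A $$ (i,j) = cnj (A $$ (j,i))"
  unfolding adj_def by simp

lemma adj_adj [simp]: "adj (adj A) = A"
  by (rule eq_matI) simp_all

lemma adj_smult: "adj (a \<cdot>\<^sub>m A) = cnj a \<cdot>\<^sub>m adj A"
  by (rule eq_matI) auto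

lemma adj_one [simp]: "adj (1\<^sub>m n) = 1\<^sub>m n"
  by (rule eq_matI) auto

definition quad_form :: "complex mat \<Rightarrow> complex Matrix.vec \<Rightarrow> complex" where
  "quad_form A w = (\<Sum>i<dim_vec w. cnj (w $ i) * (A *\<^sub>v w) $ i)"

definition sq_norm :: "nat \<Rightarrow> complex Matrix.vec \<Rightarrow> real" where
  "sq_norm n w = (\<Sum>a<n. (cmod (w $ a))\<^sup>2)"

lemma psd_iff_quad_form:
  "psd n A \<longleftrightarrow> A \<in> carrier_mat n n \<and> (\<forall>w\<in>carrier_vec n. Im (quad_form A w) = 0 \<and> Re (quad_form A w) \<ge> 0)"
  unfolding psd_def quad_form_def Let_def by (simp add: carrier_vecD)

lemma psd_carrier: "psd n A \<Longrightarrow> A \<in> carrier_mat n n"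
  unfolding psd_iff_quad_form by simp

lemma psd_quad_form:
  "psd n A \<Longrightarrow> w \<in> carrier_vec n \<Longrightarrow> Im (quad_form A w) = 0 \<and> Re (quad_form A w) \<ge> 0"
  unfolding psd_iff_quad_form by simp

lemma quad_form_mult_mat_vec:
  assumes A: "A \<in> carrier_mat n m" and P: "P \<in> carrier_mat n n" and y: "y \<in> carrier_vec m"
  shows "quad_form P (A *\<^sub>v y) = quad_form (adj A * P * A) y"
proof -
  define z where "z = P *\<^sub>v (A *\<^sub>v y)"
  have Ay: "A *\<^sub>v y \<in> carrier_vec n" and z: "z \<in> carrier_vec n" using A P y by (simp_all add: z_def)
  have "adj A * P * A *\<^sub>v y = (adj A * P) *\<^sub>v (A *\<^sub>v y)"
    using A P y by (intro assoc_mult_mat_vec) auto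
  also have "\<dots> = adj A *\<^sub>v z"
    unfolding z_def using A P Ay by (intro assoc_mult_mat_vec) auto
  finally have Pz: "adj A * P * A *\<^sub>v y = adj A *\<^sub>v z" .
  have "quad_form (adj A * P * A) y = (\<Sum>i<m. cnj (y $ i) * (\<Sum>k<n. cnj (A $$ (k,i)) * z $ k))"
    unfolding quad_form_def Pz using A y z
    by (intro sum.cong) (simp_all add: index_mult_mat_vec_sum[OF adj_carrier[OF A] z] del: index_mult_mat_vec)
  also have "\<dots> = (\<Sum>k<n. (\<Sum>i<m. cnj (A $$ (k,i) * y $ i)) * z $ k)"
    by (simp add: sum_distrib_left sum_distrib_right ac_simps sum.swap[of _ "{..<m}"])
  also have "\<dots> = quad_form P (A *\<^sub>v y)"
    unfolding quad_form_def z_def[symmetric] using A Ay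
    by (intro sum.cong) (simp_all add: index_mult_mat_vec_sum[OF A y] del: index_mult_mat_vec)
  finally show ?thesis ..
qed

lemma quad_form_one: "w \<in> carrier_vec n \<Longrightarrow> quad_form (1\<^sub>m n) w = of_real (sq_norm n w)"
  unfolding quad_form_def sq_norm_def of_real_sum
  by (intro sum.cong) (auto simp: complex_norm_square mult.commute simp flip: of_real_power)

lemma sq_norm_nonneg: "sq_norm n w \<ge> 0"
  unfolding sq_norm_def by (intro sum_nonneg) auto

lemma sq_norm_eq_0_iff: "sq_norm n w = 0 \<longleftrightarrow> (\<forall>a<n. w $ a = 0)"
  unfolding sq_norm_def by (subst sum_nonneg_eq_0_iff) auto

lemma sq_norm_smult: "sq_norm n (c \<cdot>\<^sub>v w) = (cmod c)\<^sup>2 * sq_norm n w" if "w \<in> carrier_vec n"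
  using that unfolding sq_norm_def sum_distrib_left
  by (intro sum.cong) (auto simp: norm_mult power_mult_distrib)

lemma sq_norm_unit_vec: "0 < n \<Longrightarrow> sq_norm n (unit_vec n 0) = 1"
  unfolding sq_norm_def by (simp add: sum.delta' if_distrib[of "\<lambda>x. (cmod x)\<^sup>2"] cong: if_cong)

definition two_point_vec :: "nat \<Rightarrow> nat \<Rightarrow> nat \<Rightarrow> complex \<Rightarrow> complex \<Rightarrow> complex Matrix.vec" where
  "two_point_vec n i j \<alpha> \<beta> = vec n (\<lambda>k. (if k = i then \<alpha> else 0) + (if k = j then \<beta> else 0))"

lemma two_point_vec_carrier [simp]: "two_point_vec n i j \<alpha> \<beta> \<in> carrier_vec n"
  unfolding two_point_vec_def by simp

lemma quad_form_two_point_vec: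
  assumes A: "A \<in> carrier_mat n n" and i: "i < n" and j: "j < n"
  shows "quad_form A (two_point_vec n i j \<alpha> \<beta>) =
    cnj \<alpha> * \<alpha> * A $$ (i,i) + cnj \<alpha> * \<beta> * A $$ (i,j) + cnj \<beta> * \<alpha> * A $$ (j,i) + cnj \<beta> * \<beta> * A $$ (j,j)"
proof -
  let ?w = "two_point_vec n i j \<alpha> \<beta>"
  have Aw: "(A *\<^sub>v ?w) $ k = A $$ (k,i) * \<alpha> + A $$ (k,j) * \<beta>" if "k < n" for k
    using i j unfolding index_mult_mat_vec_sum[OF A two_point_vec_carrier that]
    by (simp add: two_point_vec_def distrib_left sum.distrib if_distrib[of "(*) _"] cong: if_cong)
  have "quad_form A ?w = cnj \<alpha> * (A *\<^sub>v ?w) $ i + cnj \<beta> * (A *\<^sub>v ?w) $ j"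
    using i j unfolding quad_form_def
    by (simp add: two_point_vec_def distrib_right sum.distrib if_distrib[of "\<lambda>x. x * _"]
        if_distrib[of cnj] cong: if_cong)
  then show ?thesis
    using i j by (simp add: Aw algebra_simps)
qed

lemma psd_diag:
  assumes P: "psd n A" and i: "i < n"
  shows "Im (A $$ (i,i)) = 0" and "Re (A $$ (i,i)) \<ge> 0"
  using psd_quad_form[OF P two_point_vec_carrier[of n i i 1 0]]
  by (simp_all add: quad_form_two_point_vec[OF psd_carrier[OF P] i i])

lemma psd_hermitian:
  assumes P: "psd n A" and i: "i < n" and j: "j < n"
  shows "A $$ (j,i) = cnj (A $$ (i,j))"
proof -
  have "Im (quad_form A (two_point_vec n i j \<alpha> \<beta>)) = 0" for \<alpha> \<beta>
    using psd_quad_form[OF P] by simp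
  from this[of 1 1] this[of 1 \<i>] psd_diag[OF P i] psd_diag[OF P j]
  have "Im (A $$ (i,j) + A $$ (j,i)) = 0" and "Re (A $$ (i,j) - A $$ (j,i)) = 0"
    by (simp_all add: quad_form_two_point_vec[OF psd_carrier[OF P] i j])
  then show ?thesis by (simp add: complex_eq_iff)
qed

lemma psd_entry_bound:
  assumes P: "psd n A" and i: "i < n" and j: "j < n"
  shows "(cmod (A $$ (i,j)))\<^sup>2 \<le> Re (A $$ (i,i)) * Re (A $$ (j,j))"
proof -
  define x a b where "x = (cmod (A $$ (i,j)))\<^sup>2" and "a = Re (A $$ (i,i))" and "b = Re (A $$ (j,j))"
  have "A $$ (i,i) = of_real a" "A $$ (j,j) = of_real b" "a \<ge> 0"
    using psd_diag[OF P i] psd_diag[OF P j] by (simp_all add: a_def b_def complex_eq_iff)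
  moreover have "A $$ (i,j) * cnj (A $$ (i,j)) = of_real x"
    unfolding x_def by (simp add: complex_norm_square flip: of_real_power)
  \<comment> \<open>the quadratic form at \<open>-t A\<^sub>i\<^sub>j e\<^sub>i + e\<^sub>j\<close> is the real polynomial \<open>a x t\<^sup>2 - 2 x t + b\<close>\<close>
  ultimately have quad: "a * x * t\<^sup>2 - 2 * x * t + b \<ge> 0" for t :: real
    using psd_quad_form[OF P two_point_vec_carrier[of n i j "- of_real t * A $$ (i,j)" 1]]
    by (simp add: quad_form_two_point_vec[OF psd_carrier[OF P] i j] psd_hermitian[OF P i j]
        algebra_simps power2_eq_square)
  show ?thesis
  proof (cases "a = 0")
    case True
    have "x \<le> 0"
      using quad[of "(b + 1) / (2 * x)"] True by (cases "x = 0") (auto simp: field_simps)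
    then show ?thesis using True by (simp add: x_def a_def)
  next
    case False
    then have "a > 0" using \<open>a \<ge> 0\<close> by simp
    with quad[of "1 / a"] have "x \<le> a * b"
      by (simp add: field_simps power2_eq_square)
    then show ?thesis by (simp add: x_def a_def b_def)
  qed
qed

lemma psd_conj:
  assumes P: "psd n P" and W: "W \<in> carrier_mat n n"
  shows "psd n (adj W * P * W)"
  unfolding psd_iff_quad_form
proof (intro conjI ballI)
  show "adj W * P * W \<in> carrier_mat n n" using psd_carrier[OF P] W by (meson adj_carrier mult_carrier_mat)
  fix w :: "complex Matrix.vec" assume w: "w \<in> carrier_vec n"
  show "Im (quad_form (adj W * P * W) w) = 0" "Re (quad_form (adj W * P * W) w) \<ge> 0"
    using psd_quad_form[OF P mult_mat_vec_carrier[OF W w]]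
    unfolding quad_form_mult_mat_vec[OF W psd_carrier[OF P] w] by simp_all
qed

lemma psd_one: "psd n (1\<^sub>m n)"
  unfolding psd_iff_quad_form by (simp add: quad_form_one sq_norm_nonneg)

lemma psd_zero: "psd n (0\<^sub>m n n)"
  unfolding psd_iff_quad_form quad_form_def by simp

lemma unitary_carrier: "unitary_mat d U \<Longrightarrow> U \<in> carrier_mat d d"
  unfolding unitary_mat_def by simp

lemma unitary_adj: "unitary_mat d U \<Longrightarrow> unitary_mat d (adj U)"
  unfolding unitary_mat_def by simp

lemma unitary_one: "unitary_mat d (1\<^sub>m d)"
  unfolding unitary_mat_def by simp

lemma psd_proj: "\<psi> \<in> carrier_vec n \<Longrightarrow> psd n (proj \<psi>)"
proof (unfold psd_iff_quad_form, intro conjI ballI)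
  fix w :: "complex Matrix.vec" assume \<psi>: "\<psi> \<in> carrier_vec n" and w: "w \<in> carrier_vec n"
  define \<beta> where "\<beta> = (\<Sum>j<n. cnj (\<psi> $ j) * w $ j)"
  have "(proj \<psi> *\<^sub>v w) $ i = \<psi> $ i * \<beta>" if "i < n" for i
    using \<psi> w that unfolding \<beta>_def sum_distrib_left
    by (auto simp: proj_def scalar_prod_def atLeast0LessThan ac_simps intro: sum.cong)
  then have "quad_form (proj \<psi>) w = (\<Sum>i<n. cnj (w $ i) * \<psi> $ i) * \<beta>"
    using w unfolding quad_form_def by (simp add: sum_distrib_right mult.assoc)
  also have "(\<Sum>i<n. cnj (w $ i) * \<psi> $ i) = cnj \<beta>"
    unfolding \<beta>_def by (simp add: cnj_sum mult.commute)
  finally have "quad_form (proj \<psi>) w = of_real ((cmod \<beta>)\<^sup>2)"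
    by (metis complex_norm_square mult.commute)
  then show "Im (quad_form (proj \<psi>) w) = 0" "Re (quad_form (proj \<psi>) w) \<ge> 0"
    by simp_all
qed (simp add: proj_def)

lemma unitary_smult:
  assumes U: "unitary_mat d U" and a: "cmod a = 1"
  shows "unitary_mat d (a \<cdot>\<^sub>m U)"
proof -
  have C: "U \<in> carrier_mat d d" using U by (rule unitary_carrier)
  have "cnj a * a = 1" using complex_norm_square[of a] a by (simp add: mult.commute)
  then have "cnj a \<cdot>\<^sub>m (a \<cdot>\<^sub>m 1\<^sub>m d) = 1\<^sub>m d" "a \<cdot>\<^sub>m (cnj a \<cdot>\<^sub>m 1\<^sub>m d) = 1\<^sub>m d"
    by (auto intro!: eq_matI simp: mult.commute)
  with U C show ?thesis
    unfolding unitary_mat_def adj_smult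
    by (simp add: mult_smult_assoc_mat[of _ d d _ d] mult_smult_distrib[of _ d d _ d])
qed

lemma unitary_sq_norm:
  assumes U: "unitary_mat d U" and w: "w \<in> carrier_vec d"
  shows "sq_norm d (U *\<^sub>v w) = sq_norm d w"
proof -
  have C: "U \<in> carrier_mat d d" using U by (rule unitary_carrier)
  have "quad_form (1\<^sub>m d) (U *\<^sub>v w) = quad_form (adj U * 1\<^sub>m d * U) w"
    by (rule quad_form_mult_mat_vec[OF C one_carrier_mat w])
  also have "adj U * 1\<^sub>m d * U = 1\<^sub>m d" using U C unfolding unitary_mat_def by simp
  finally show ?thesis using C w by (simp add: quad_form_one)
qed

lemma povm2_carrier: "povm2 n P0 P1 \<Longrightarrow> P0 \<in> carrier_mat n n \<and> P1 \<in> carrier_mat n n"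
  unfolding povm2_def by (simp add: psd_carrier)

lemma povm2_trivial: "povm2 n (1\<^sub>m n) (0\<^sub>m n n)"
  unfolding povm2_def by (simp add: psd_one psd_zero)

lemma unitary_entry_bound:
  assumes U: "unitary_mat d U" and a: "a < d" and b: "b < d"
  shows "cmod (U $$ (a,b)) \<le> 1"
proof -
  have C: "U \<in> carrier_mat d d" using U by (rule unitary_carrier)
  have "of_real (\<Sum>k<d. (cmod (U $$ (k,b)))\<^sup>2) = (adj U * U) $$ (b,b)"
    unfolding index_mult_mat_sum[OF adj_carrier[OF C] C b b] of_real_sum
    using b C by (intro sum.cong) (simp_all add: complex_norm_square mult.commute del: of_real_power)
  also have "\<dots> = 1" using U b unfolding unitary_mat_def by simp
  finally have "(\<Sum>k<d. (cmod (U $$ (k,b)))\<^sup>2) = 1" by (simp only: of_real_eq_1_iff)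
  moreover have "(cmod (U $$ (a,b)))\<^sup>2 \<le> (\<Sum>k<d. (cmod (U $$ (k,b)))\<^sup>2)"
    using a by (intro member_le_sum) auto
  ultimately show ?thesis by (simp add: power_le_one_iff)
qed

lemma povm2_conj:
  assumes P: "povm2 n P0 P1" and W: "unitary_mat n W"
  shows "povm2 n (adj W * P0 * W) (adj W * P1 * W)"
proof -
  have C: "P0 \<in> carrier_mat n n" "P1 \<in> carrier_mat n n" using povm2_carrier[OF P] by auto
  have Wc: "W \<in> carrier_mat n n" using W by (rule unitary_carrier)
  have "adj W * P0 * W + adj W * P1 * W = (adj W * P0 + adj W * P1) * W"
    using C Wc by (intro add_mult_distrib_mat[symmetric]) auto
  also have "adj W * P0 + adj W * P1 = adj W * (P0 + P1)"
    using C Wc by (intro mult_add_distrib_mat[symmetric]) auto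
  also have "adj W * (P0 + P1) * W = 1\<^sub>m n"
    using P W Wc unfolding povm2_def unitary_mat_def by simp
  finally show ?thesis using P Wc unfolding povm2_def by (simp add: psd_conj)
qed

lemma povm2_entry_bound:
  assumes P: "povm2 n P0 P1" and a: "a < n" and b: "b < n"
  shows "cmod (P0 $$ (a,b)) \<le> 1" and "cmod (P1 $$ (a,b)) \<le> 1"
proof -
  have psd: "psd n P0" "psd n P1" using P unfolding povm2_def by auto
  have "P0 $$ (k,k) + P1 $$ (k,k) = 1" if "k < n" for k
    using P that povm2_carrier[OF P] unfolding povm2_def
    by (metis carrier_matD index_add_mat(1) index_one_mat(1))
  then have "Re (P0 $$ (k,k)) + Re (P1 $$ (k,k)) = 1" if "k < n" for k
    using that by (metis one_complex.sel(1) plus_complex.sel(1))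
  then have diag: "0 \<le> Re (P0 $$ (k,k)) \<and> Re (P0 $$ (k,k)) \<le> 1 \<and> 0 \<le> Re (P1 $$ (k,k)) \<and> Re (P1 $$ (k,k)) \<le> 1"
    if "k < n" for k
    using psd_diag(2)[OF psd(1) that] psd_diag(2)[OF psd(2) that] that by fastforce
  have "(cmod (P0 $$ (a,b)))\<^sup>2 \<le> 1" "(cmod (P1 $$ (a,b)))\<^sup>2 \<le> 1"
    using psd_entry_bound[OF psd(1) a b] psd_entry_bound[OF psd(2) a b] diag[OF a] diag[OF b]
      mult_le_one[of "Re (P0 $$ (a,a))" "Re (P0 $$ (b,b))"] mult_le_one[of "Re (P1 $$ (a,a))" "Re (P1 $$ (b,b))"]
    by linarith+
  then show "cmod (P0 $$ (a,b)) \<le> 1" "cmod (P1 $$ (a,b)) \<le> 1"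
    by (simp_all add: power_le_one_iff)
qed

definition householder :: "nat \<Rightarrow> real \<Rightarrow> complex Matrix.vec \<Rightarrow> complex mat" where
  "householder d k w = mat d d (\<lambda>(a,b). of_bool (a = b) - of_real k * w $ a * cnj (w $ b))"

lemma householder_carrier [simp]: "householder d k w \<in> carrier_mat d d"
  unfolding householder_def by simp

lemma adj_householder [simp]: "adj (householder d k w) = householder d k w"
  by (rule eq_matI) (auto simp: householder_def)

lemma householder_unitary:
  assumes k: "k * k * sq_norm d w = 2 * k"
  shows "unitary_mat d (householder d k w)"
proof -
  define K where "K = (of_real k :: complex)"
  have KK: "K * K * (\<Sum>c<d. cnj (w $ c) * w $ c) = 2 * K"
    using arg_cong[OF k, of complex_of_real]
    by (simp add: K_def sq_norm_def of_real_sum complex_norm_square mult.commute del: of_real_power)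
  have "householder d k w * householder d k w = 1\<^sub>m d"
  proof (rule eq_matI)
    fix a b assume "a < dim_row (1\<^sub>m d)" "b < dim_col (1\<^sub>m d)"
    then have a: "a < d" and b: "b < d" by simp_all
    have "(householder d k w * householder d k w) $$ (a,b)
        = (\<Sum>c<d. (of_bool (a = c) - K * w $ a * cnj (w $ c)) * (of_bool (c = b) - K * w $ c * cnj (w $ b)))"
      unfolding index_mult_mat_sum[OF householder_carrier householder_carrier a b]
      using a b by (intro sum.cong) (simp_all add: householder_def K_def)
    also have "\<dots> = of_bool (a = b) - 2 * K * w $ a * cnj (w $ b)
        + w $ a * cnj (w $ b) * (K * K * (\<Sum>c<d. cnj (w $ c) * w $ c))"
      using a b by (simp add: algebra_simps sum_subtractf sum.distrib sum_distrib_left of_bool_def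
          if_distrib[of "(*) _"] if_distrib[of "\<lambda>x. x * _"] cong: if_cong)
    also have "\<dots> = 1\<^sub>m d $$ (a,b)"
      using a b unfolding KK by (simp add: algebra_simps)
    finally show "(householder d k w * householder d k w) $$ (a,b) = 1\<^sub>m d $$ (a,b)" .
  qed (simp_all add: householder_def)
  then show ?thesis
    unfolding unitary_mat_def by simp
qed

lemma unitary_maps_unit_vec_zero:
  assumes d: "0 < d" and u: "u \<in> carrier_vec d" and nu: "sq_norm d u = 1"
  shows "\<exists>W. unitary_mat d W \<and> W *\<^sub>v unit_vec d 0 = u"
proof -
  define c where "c = cmod (u $ 0)"
  define \<alpha> where "\<alpha> = (if u $ 0 = 0 then 1 else u $ 0 / of_real c)"
  have \<alpha>: "cmod \<alpha> = 1" and u0: "u $ 0 = of_real c * \<alpha>"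
    by (auto simp: \<alpha>_def c_def norm_divide)
  have \<alpha>\<alpha>: "\<alpha> * cnj \<alpha> = 1"
    using \<alpha> complex_norm_square[of \<alpha>] by simp
  \<comment> \<open>reflect \<open>\<alpha> e\<^sub>0\<close> onto \<open>u\<close>; the phase \<open>\<alpha>\<close> makes \<open>\<langle>\<alpha> e\<^sub>0, u\<rangle> = c\<close> real\<close>
  define w where "w = vec d (\<lambda>a. of_bool (a = 0) * \<alpha> - u $ a)"
  have wa: "w $ a = of_bool (a = 0) * \<alpha> - u $ a" if "a < d" for a
    using that by (simp add: w_def)
  have w0: "\<alpha> * cnj (w $ 0) = of_real (1 - c)"
    using d \<alpha>\<alpha> by (simp add: wa u0 algebra_simps)
  have "\<alpha> - u $ 0 = \<alpha> * of_real (1 - c)"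
    unfolding u0 by (simp add: algebra_simps)
  then have \<alpha>u0: "cmod (\<alpha> - u $ 0) = \<bar>1 - c\<bar>"
    using \<alpha> by (simp add: norm_mult del: of_real_diff)
  have "sq_norm d w - sq_norm d u = (\<Sum>a<d. if a = 0 then (cmod (\<alpha> - u $ 0))\<^sup>2 - c\<^sup>2 else 0)"
    unfolding sq_norm_def sum_subtractf[symmetric]
    by (intro sum.cong) (auto simp: wa c_def norm_minus_commute)
  also have "\<dots> = (1 - c)\<^sup>2 - c\<^sup>2"
    using d by (simp add: \<alpha>u0)
  finally have nw: "sq_norm d w = 2 - 2 * c"
    using nu by (simp add: power2_eq_square algebra_simps)
  define k where "k = (if c = 1 then 0 else 1 / (1 - c))"
  define W where "W = \<alpha> \<cdot>\<^sub>m householder d k w"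
  have W: "W \<in> carrier_mat d d" unfolding W_def by simp
  have "unitary_mat d W"
    unfolding W_def using \<alpha> nw
    by (intro unitary_smult householder_unitary) (simp add: k_def field_simps)
  moreover have "W *\<^sub>v unit_vec d 0 = u"
  proof (rule eq_vecI)
    fix a assume "a < dim_vec u"
    then have a: "a < d" using u by simp
    have "(W *\<^sub>v unit_vec d 0) $ a = W $$ (a,0)"
      unfolding index_mult_mat_vec_sum[OF W unit_vec_carrier a]
      using d by (simp add: if_distrib[of "(*) _"] cong: if_cong)
    also have "\<dots> = of_bool (a = 0) * \<alpha> - w $ a * (of_real k * (\<alpha> * cnj (w $ 0)))"
      using a d by (simp add: W_def householder_def algebra_simps)
    also have "\<dots> = u $ a"
    proof (cases "c = 1")
      case True
      then have "sq_norm d w = 0" using nw by simp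
      then have "w $ a = 0" using a by (simp add: sq_norm_eq_0_iff)
      then show ?thesis using a wa[OF a] by simp
    next
      case False
      then have "of_real k * (\<alpha> * cnj (w $ 0)) = 1"
        by (simp add: w0 k_def flip: of_real_mult)
      then show ?thesis using wa[OF a] by simp
    qed
    finally show "(W *\<^sub>v unit_vec d 0) $ a = u $ a" .
  qed (use u W in simp)
  ultimately show ?thesis by blast
qed

lemma unitary_pair_canonical_form:
  assumes d: "0 < d" and \<phi>: "\<phi> \<in> carrier_vec d" and U: "\<And>b. unitary_mat d (U b)"
  obtains W T where "unitary_mat d W" and "unitary_mat d T"
    and "\<And>b. U b *\<^sub>v \<phi> = of_real (sqrt (sq_norm d \<phi>)) \<cdot>\<^sub>v (W *\<^sub>v ((if b then T else 1\<^sub>m d) *\<^sub>v unit_vec d 0))"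
proof (cases "sq_norm d \<phi> = 0")
  case True
  then have "\<phi> = 0\<^sub>v d" using \<phi> by (auto simp: sq_norm_eq_0_iff)
  with U have "U b *\<^sub>v \<phi> = of_real (sqrt (sq_norm d \<phi>)) \<cdot>\<^sub>v (1\<^sub>m d *\<^sub>v ((if b then 1\<^sub>m d else 1\<^sub>m d) *\<^sub>v unit_vec d 0))" for b
    using True unitary_carrier[OF U[of b]] by (auto intro!: eq_vecI)
  with that[OF unitary_one unitary_one] show ?thesis by blast
next
  case False
  define s where "s = sqrt (sq_norm d \<phi>)"
  have s: "s > 0" using False sq_norm_nonneg[of d \<phi>] by (simp add: s_def)
  define u where "u b = of_real (1 / s) \<cdot>\<^sub>v (U b *\<^sub>v \<phi>)" for b
  have U\<phi>: "U b *\<^sub>v \<phi> \<in> carrier_vec d" for b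
    using unitary_carrier[OF U] \<phi> by (rule mult_mat_vec_carrier)
  have u: "u b \<in> carrier_vec d" for b
    using U\<phi> by (simp add: u_def)
  have Uu: "U b *\<^sub>v \<phi> = of_real s \<cdot>\<^sub>v u b" for b
    using s by (simp add: u_def smult_smult_assoc flip: of_real_mult)
  have nu: "sq_norm d (u b) = 1" for b
    using s sq_norm_nonneg[of d \<phi>]
    by (simp add: u_def sq_norm_smult[OF U\<phi>] unitary_sq_norm[OF U \<phi>] s_def power_divide norm_divide)
  obtain W where W: "unitary_mat d W" and We: "W *\<^sub>v unit_vec d 0 = u False"
    using unitary_maps_unit_vec_zero[OF d u nu] by blast
  have Wc: "W \<in> carrier_mat d d" using W by (rule unitary_carrier)
  have "adj W *\<^sub>v u True \<in> carrier_vec d" and "sq_norm d (adj W *\<^sub>v u True) = 1"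
    using mult_mat_vec_carrier[OF adj_carrier[OF Wc] u] by (simp_all add: unitary_sq_norm[OF unitary_adj[OF W] u] nu)
  then obtain T where T: "unitary_mat d T" and Te: "T *\<^sub>v unit_vec d 0 = adj W *\<^sub>v u True"
    using unitary_maps_unit_vec_zero[OF d] by blast
  have "W *\<^sub>v (T *\<^sub>v unit_vec d 0) = u True"
    using W Wc u unfolding Te unitary_mat_def by (simp add: assoc_mult_mat_vec[symmetric, of _ d d _ d])
  then have "U b *\<^sub>v \<phi> = of_real s \<cdot>\<^sub>v (W *\<^sub>v ((if b then T else 1\<^sub>m d) *\<^sub>v unit_vec d 0))" for b
    by (cases b) (simp_all add: Uu We)
  with that[OF W T] show ?thesis by (simp add: s_def)
qed

definition block :: "nat \<Rightarrow> nat \<Rightarrow> complex Matrix.vec \<Rightarrow> complex Matrix.vec" where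
  "block d i v = vec d (\<lambda>a. v $ (i*d + a))"

definition block_diag :: "nat \<Rightarrow> nat \<Rightarrow> (nat \<Rightarrow> complex mat) \<Rightarrow> complex mat" where
  "block_diag N d F = mat (N*d) (N*d)
     (\<lambda>(r,c). if r div d = c div d then F (r div d) $$ (r mod d, c mod d) else 0)"

lemma ctrl_eq_block_diag: "ctrl N d Us x = block_diag N d (\<lambda>i. Us i (x ! i))"
  unfolding ctrl_def block_diag_def by simp

lemma block_carrier [simp]: "block d i v \<in> carrier_vec d"
  unfolding block_def by simp

lemma index_block [simp]: "a < d \<Longrightarrow> block d i v $ a = v $ (i*d + a)"
  unfolding block_def by simp

lemma block_diag_carrier [simp]: "block_diag N d F \<in> carrier_mat (N*d) (N*d)"
  unfolding block_diag_def by simp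

lemma block_index_less: "i < N \<Longrightarrow> a < d \<Longrightarrow> i*d + a < N*(d::nat)"
proof -
  assume "i < N" "a < d"
  then have "i*d + a < Suc i * d" by simp
  also have "\<dots> \<le> N*d" using \<open>i < N\<close> by (intro mult_right_mono) auto
  finally show ?thesis .
qed

lemma block_index_decomp:
  "r < N*(d::nat) \<Longrightarrow> r div d < N \<and> r mod d < d \<and> r = r div d * d + r mod d"
proof -
  assume r: "r < N*d"
  then have "d > 0" by (cases d) auto
  with r show ?thesis by (simp add: less_mult_imp_div_less)
qed

lemma block_index_eq_iff:
  assumes "a < d" and "b < (d::nat)"
  shows "i*d + a = j*d + b \<longleftrightarrow> i = j \<and> a = b"
proof
  assume eq: "i*d + a = j*d + b"
  have "(i*d + a) div d = i" "(i*d + a) mod d = a" "(j*d + b) div d = j" "(j*d + b) mod d = b"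
    using assms by simp_all
  then show "i = j \<and> a = b" unfolding eq by simp
qed simp

lemma sum_blocks: "(\<Sum>k<N*d. g k) = (\<Sum>i<N. \<Sum>a<(d::nat). g (i*d + a))"
proof (induction N)
  case (Suc N)
  have "(\<Sum>k<m + e. g k) = (\<Sum>k<m. g k) + (\<Sum>a<e. g (m + a))" for m e
    by (induction e) (simp_all add: add.assoc)
  from this[of "N*d" d] show ?case using Suc by (simp add: add.commute)
qed simp

lemma sq_norm_blocks: "sq_norm (N*d) \<psi> = (\<Sum>i<N. sq_norm d (block d i \<psi>))"
  unfolding sq_norm_def sum_blocks[where N=N and d=d] by simp

lemma eq_vec_by_blocks:
  assumes "u \<in> carrier_vec (N*d)" "w \<in> carrier_vec (N*d)" "\<And>i. i < N \<Longrightarrow> block d i u = block d i w"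
  shows "u = w"
proof (rule eq_vecI)
  fix r assume "r < dim_vec w"
  then have "r < N*d" using assms(2) by simp
  from block_index_decomp[OF this] arg_cong[OF assms(3), of "r div d" "\<lambda>v. v $ (r mod d)"]
  show "u $ r = w $ r" by simp
qed (use assms in simp)

lemma eq_mat_by_blocks:
  assumes "A \<in> carrier_mat (N*d) (N*d)" "B \<in> carrier_mat (N*d) (N*d)"
    and "\<And>i a j b. i < N \<Longrightarrow> a < d \<Longrightarrow> j < N \<Longrightarrow> b < d \<Longrightarrow> A $$ (i*d + a, j*d + b) = B $$ (i*d + a, j*d + b)"
  shows "A = B"
proof (rule eq_matI)
  fix r c assume "r < dim_row B" and "c < dim_col B"
  then have "r < N*d" "c < N*d" using assms(2) by auto
  with block_index_decomp assms(3)[of "r div d" "r mod d" "c div d" "c mod d"]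
  show "A $$ (r, c) = B $$ (r, c)" by metis
qed (use assms in auto)

lemma block_diag_dims [simp]: "dim_row (block_diag N d F) = N*d" "dim_col (block_diag N d F) = N*d"
  unfolding block_diag_def by simp_all

lemma index_block_diag:
  "i < N \<Longrightarrow> a < d \<Longrightarrow> j < N \<Longrightarrow> b < d \<Longrightarrow>
   block_diag N d F $$ (i*d + a, j*d + b) = (if i = j then F i $$ (a,b) else 0)"
  unfolding block_diag_def by (simp add: block_index_less)

lemma block_diag_cong: "(\<And>i. i < N \<Longrightarrow> F i = G i) \<Longrightarrow> block_diag N d F = block_diag N d G"
  by (rule eq_mat_by_blocks[of _ N d]) (auto simp: index_block_diag)

lemma block_mult_block_diag:
  assumes F: "F i \<in> carrier_mat d d" and v: "v \<in> carrier_vec (N*d)" and i: "i < N"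
  shows "block d i (block_diag N d F *\<^sub>v v) = F i *\<^sub>v block d i v"
proof (rule eq_vecI)
  fix a assume "a < dim_vec (F i *\<^sub>v block d i v)"
  then have a: "a < d" using F by simp
  have "(block_diag N d F *\<^sub>v v) $ (i*d + a) = (\<Sum>j<N. \<Sum>b<d. block_diag N d F $$ (i*d + a, j*d + b) * v $ (j*d + b))"
    by (simp add: index_mult_mat_vec_sum[OF block_diag_carrier v block_index_less[OF i a]] sum_blocks)
  also have "\<dots> = (\<Sum>j<N. if j = i then (\<Sum>b<d. F i $$ (a,b) * v $ (i*d + b)) else 0)"
    using i a by (intro sum.cong) (auto simp: index_block_diag)
  also have "\<dots> = (\<Sum>b<d. F i $$ (a,b) * v $ (i*d + b))"
    using i by simp
  also have "\<dots> = (F i *\<^sub>v block d i v) $ a"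
    by (simp add: index_mult_mat_vec_sum[OF F block_carrier a])
  finally show "block d i (block_diag N d F *\<^sub>v v) $ a = (F i *\<^sub>v block d i v) $ a"
    using a by simp
qed (use F in simp)

lemma block_diag_mult:
  assumes F: "\<And>i. i < N \<Longrightarrow> F i \<in> carrier_mat d d" and G: "\<And>i. i < N \<Longrightarrow> G i \<in> carrier_mat d d"
  shows "block_diag N d F * block_diag N d G = block_diag N d (\<lambda>i. F i * G i)"
proof (rule eq_mat_by_blocks[of _ N d])
  fix i a j b assume i: "i < N" and a: "a < d" and j: "j < N" and b: "b < d"
  have "(block_diag N d F * block_diag N d G) $$ (i*d + a, j*d + b)
      = (\<Sum>l<N. \<Sum>e<d. block_diag N d F $$ (i*d + a, l*d + e) * block_diag N d G $$ (l*d + e, j*d + b))"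
    by (simp add: index_mult_mat_sum[OF block_diag_carrier block_diag_carrier
          block_index_less[OF i a] block_index_less[OF j b]] sum_blocks)
  also have "\<dots> = (\<Sum>l<N. if l = i then (if i = j then (\<Sum>e<d. F i $$ (a,e) * G i $$ (e,b)) else 0) else 0)"
    using i a j b by (intro sum.cong) (auto simp: index_block_diag)
  also have "\<dots> = block_diag N d (\<lambda>i. F i * G i) $$ (i*d + a, j*d + b)"
    using i a j b index_mult_mat_sum[OF F[OF i] G[OF i] a b] by (cases "i = j") (simp_all add: index_block_diag)
  finally show "(block_diag N d F * block_diag N d G) $$ (i*d + a, j*d + b)
      = block_diag N d (\<lambda>i. F i * G i) $$ (i*d + a, j*d + b)" .
qed (simp_all add: mult_carrier_mat[OF block_diag_carrier block_diag_carrier])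

lemma adj_block_diag:
  assumes "\<And>i. i < N \<Longrightarrow> F i \<in> carrier_mat d d"
  shows "adj (block_diag N d F) = block_diag N d (\<lambda>i. adj (F i))"
proof (rule eq_mat_by_blocks[of _ N d])
  fix i a j b assume "i < N" "a < d" "j < N" "b < d"
  with assms[of i] show "adj (block_diag N d F) $$ (i*d + a, j*d + b) = block_diag N d (\<lambda>i. adj (F i)) $$ (i*d + a, j*d + b)"
    by (auto simp: index_block_diag block_index_less)
qed simp_all

lemma block_diag_one: "block_diag N d (\<lambda>i. 1\<^sub>m d) = 1\<^sub>m (N*d)"
proof (rule eq_mat_by_blocks[of _ N d])
  fix i a j b assume "i < N" "a < d" "j < N" "b < d"
  then show "block_diag N d (\<lambda>i. 1\<^sub>m d) $$ (i*d + a, j*d + b) = 1\<^sub>m (N*d) $$ (i*d + a, j*d + b)"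
    by (simp add: index_block_diag block_index_less block_index_eq_iff)
qed simp_all

lemma block_diag_unitary:
  assumes "\<And>i. i < N \<Longrightarrow> unitary_mat d (F i)"
  shows "unitary_mat (N*d) (block_diag N d F)"
proof -
  have F: "\<And>i. i < N \<Longrightarrow> F i \<in> carrier_mat d d" using assms by (rule unitary_carrier)
  have "adj (block_diag N d F) * block_diag N d F = block_diag N d (\<lambda>i. adj (F i) * F i)"
    and "block_diag N d F * adj (block_diag N d F) = block_diag N d (\<lambda>i. F i * adj (F i))"
    by (simp_all add: adj_block_diag F block_diag_mult)
  moreover have "block_diag N d (\<lambda>i. adj (F i) * F i) = 1\<^sub>m (N*d)"
    and "block_diag N d (\<lambda>i. F i * adj (F i)) = 1\<^sub>m (N*d)"
    using assms unfolding block_diag_one[symmetric] unitary_mat_def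
    by (auto intro: block_diag_cong)
  ultimately show ?thesis unfolding unitary_mat_def by simp
qed

lemma prod_state_carrier [simp]: "prod_state N d p \<chi> \<in> carrier_vec (N*d)"
  unfolding prod_state_def by simp

lemma block_prod_state:
  "i < N \<Longrightarrow> \<chi> \<in> carrier_vec d \<Longrightarrow> block d i (prod_state N d p \<chi>) = of_real (sqrt (p i)) \<cdot>\<^sub>v \<chi>"
  by (rule eq_vecI) (auto simp: prod_state_def block_index_less)

lemma controlled_state_canonical_form:
  assumes d: "0 < d" and \<psi>: "\<psi> \<in> carrier_vec (N*d)" and Us: "\<forall>j<N. \<forall>b. unitary_mat d (Us j b)"
  obtains W T where "unitary_mat (N*d) W" and "\<forall>i<N. unitary_mat d (T i)"
    and "\<And>x. ctrl N d Us x *\<^sub>v \<psi> = W *\<^sub>v (ctrl N d (\<lambda>i b. if b then T i else 1\<^sub>m d) x *\<^sub>v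
           prod_state N d (\<lambda>i. sq_norm d (block d i \<psi>)) (unit_vec d 0))"
proof -
  define s :: "nat \<Rightarrow> complex" where "s i = of_real (sqrt (sq_norm d (block d i \<psi>)))" for i
  have "\<exists>W T. unitary_mat d W \<and> unitary_mat d T \<and>
      (\<forall>b. Us i b *\<^sub>v block d i \<psi> = s i \<cdot>\<^sub>v (W *\<^sub>v ((if b then T else 1\<^sub>m d) *\<^sub>v unit_vec d 0)))"
    if "i < N" for i
    using unitary_pair_canonical_form[OF d block_carrier, of "Us i" i \<psi>] Us that
    unfolding s_def by metis
  then obtain Wb T where WT: "\<And>i. i < N \<Longrightarrow> unitary_mat d (Wb i) \<and> unitary_mat d (T i) \<and>
      (\<forall>b. Us i b *\<^sub>v block d i \<psi> = s i \<cdot>\<^sub>v (Wb i *\<^sub>v ((if b then T i else 1\<^sub>m d) *\<^sub>v unit_vec d 0)))"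
    by metis
  have Wc: "Wb i \<in> carrier_mat d d" and Tc: "(if b then T i else 1\<^sub>m d) \<in> carrier_mat d d"
    if "i < N" for i b
    using WT[OF that] unitary_carrier by auto
  define \<psi>' where "\<psi>' = prod_state N d (\<lambda>i. sq_norm d (block d i \<psi>)) (unit_vec d 0)"
  have \<psi>': "\<psi>' \<in> carrier_vec (N*d)" by (simp add: \<psi>'_def prod_state_def)
  have "ctrl N d Us x *\<^sub>v \<psi> = block_diag N d Wb *\<^sub>v (ctrl N d (\<lambda>i b. if b then T i else 1\<^sub>m d) x *\<^sub>v \<psi>')" for x
  proof (rule eq_vec_by_blocks[of _ N d])
    fix i assume i: "i < N"
    have "block d i (ctrl N d Us x *\<^sub>v \<psi>) = Us i (x ! i) *\<^sub>v block d i \<psi>"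
      unfolding ctrl_eq_block_diag
      by (rule block_mult_block_diag[OF unitary_carrier \<psi> i]) (use Us i in blast)
    also have "\<dots> = s i \<cdot>\<^sub>v (Wb i *\<^sub>v ((if x ! i then T i else 1\<^sub>m d) *\<^sub>v unit_vec d 0))"
      using WT[OF i] by blast
    also have "\<dots> = Wb i *\<^sub>v ((if x ! i then T i else 1\<^sub>m d) *\<^sub>v (s i \<cdot>\<^sub>v unit_vec d 0))"
      using Wc[OF i] Tc[OF i, of True] by (cases "x ! i") (simp_all add: mult_mat_vec mult_mat_vec_carrier)
    also have "s i \<cdot>\<^sub>v unit_vec d 0 = block d i \<psi>'"
      using i by (simp add: \<psi>'_def block_prod_state s_def)
    also have "Wb i *\<^sub>v ((if x ! i then T i else 1\<^sub>m d) *\<^sub>v block d i \<psi>')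
        = block d i (block_diag N d Wb *\<^sub>v (ctrl N d (\<lambda>i b. if b then T i else 1\<^sub>m d) x *\<^sub>v \<psi>'))"
      using Wc[OF i] Tc[OF i] \<psi>' i
      by (simp add: block_mult_block_diag ctrl_eq_block_diag mult_mat_vec_carrier[OF block_diag_carrier])
    finally show "block d i (ctrl N d Us x *\<^sub>v \<psi>) = block d i (block_diag N d Wb *\<^sub>v
        (ctrl N d (\<lambda>i b. if b then T i else 1\<^sub>m d) x *\<^sub>v \<psi>'))" .
  qed (use \<psi> \<psi>' in \<open>simp_all add: ctrl_eq_block_diag mult_mat_vec_carrier[OF block_diag_carrier]\<close>)
  moreover have "unitary_mat (N*d) (block_diag N d Wb)"
    using WT by (intro block_diag_unitary) blast
  ultimately show ?thesis
    using that WT unfolding \<psi>'_def by blast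
qed

lemma tr_add: "A \<in> carrier_mat n n \<Longrightarrow> B \<in> carrier_mat n n \<Longrightarrow> tr (A + B) = tr A + tr B"
  unfolding tr_def by (simp add: sum.distrib)

lemma tr_smult: "A \<in> carrier_mat n n \<Longrightarrow> tr (c \<cdot>\<^sub>m A) = c * tr A"
  unfolding tr_def sum_distrib_left by (intro sum.cong) auto

lemma proj_carrier [simp]: "\<psi> \<in> carrier_vec n \<Longrightarrow> proj \<psi> \<in> carrier_mat n n"
  unfolding proj_def by simp

lemma tr_proj: "\<psi> \<in> carrier_vec n \<Longrightarrow> tr (proj \<psi>) = of_real (sq_norm n \<psi>)"
  unfolding tr_def sq_norm_def proj_def of_real_sum
  by (intro sum.cong) (auto simp: complex_norm_square simp del: of_real_power)

lemma mult_proj_adj: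
  assumes C: "C \<in> carrier_mat n m" and \<psi>: "\<psi> \<in> carrier_vec m"
  shows "C * proj \<psi> * adj C = proj (C *\<^sub>v \<psi>)"
proof (rule eq_matI)
  fix i j assume "i < dim_row (proj (C *\<^sub>v \<psi>))" "j < dim_col (proj (C *\<^sub>v \<psi>))"
  then have i: "i < n" and j: "j < n" using C by (simp_all add: proj_def)
  have Cp: "(C * proj \<psi>) $$ (i,l) = (C *\<^sub>v \<psi>) $ i * cnj (\<psi> $ l)" if "l < m" for l
    unfolding index_mult_mat_sum[OF C proj_carrier[OF \<psi>] i that] index_mult_mat_vec_sum[OF C \<psi> i]
    using \<psi> that by (simp add: proj_def sum_distrib_right mult.assoc)
  have "(C * proj \<psi> * adj C) $$ (i,j) = (\<Sum>l<m. (C *\<^sub>v \<psi>) $ i * cnj (\<psi> $ l) * cnj (C $$ (j,l)))"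
    using C j by (simp add: index_mult_mat_sum[OF mult_carrier_mat[OF C proj_carrier[OF \<psi>]] adj_carrier[OF C] i j]
        Cp del: index_mult_mat)
  also have "\<dots> = (C *\<^sub>v \<psi>) $ i * cnj ((C *\<^sub>v \<psi>) $ j)"
    by (simp add: index_mult_mat_vec_sum[OF C \<psi> j] sum_distrib_left ac_simps del: index_mult_mat_vec)
  finally show "(C * proj \<psi> * adj C) $$ (i,j) = proj (C *\<^sub>v \<psi>) $$ (i,j)"
    using i j C by (simp add: proj_def)
qed (use C in \<open>simp_all add: proj_def\<close>)

lemma tr_mult_proj:
  assumes P: "P \<in> carrier_mat n n" and y: "y \<in> carrier_vec n"
  shows "tr (P * proj y) = quad_form P y"
proof -
  have "(P * proj y) $$ (i,i) = (\<Sum>k<n. P $$ (i,k) * (y $ k * cnj (y $ i)))" if i: "i < n" for i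
    unfolding index_mult_mat_sum[OF P proj_carrier[OF y] i i] using y i by (simp add: proj_def)
  then have "tr (P * proj y) = (\<Sum>i<n. \<Sum>k<n. P $$ (i,k) * (y $ k * cnj (y $ i)))"
    unfolding tr_def using P y by simp
  also have "\<dots> = quad_form P y"
    unfolding quad_form_def using P y
    by (intro sum.cong) (simp_all add: index_mult_mat_vec_sum[OF P y] sum_distrib_left ac_simps
        del: index_mult_mat_vec)
  finally show ?thesis .
qed

lemma ctrl_carrier [simp]: "ctrl N d Us x \<in> carrier_mat (N*d) (N*d)"
  unfolding ctrl_eq_block_diag by simp

lemma win_prob_proj:
  assumes \<psi>: "\<psi> \<in> carrier_vec (N*d)"
    and P: "P0 \<in> carrier_mat (N*d) (N*d)" "P1 \<in> carrier_mat (N*d) (N*d)"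
  shows "win_prob N d v q (proj \<psi>) Us P0 P1 =
    Re (\<Sum>x\<in>bitstrings N. of_real (q x) * quad_form (if v x then P1 else P0) (ctrl N d Us x *\<^sub>v \<psi>))"
  unfolding win_prob_def
proof (intro arg_cong[where f=Re] sum.cong refl arg_cong[where f="(*) _"])
  fix x
  have "(if v x then P1 else P0) \<in> carrier_mat (N*d) (N*d)"
    using P by simp
  then show "tr ((if v x then P1 else P0) * (ctrl N d Us x * proj \<psi> * adj (ctrl N d Us x))) =
      quad_form (if v x then P1 else P0) (ctrl N d Us x *\<^sub>v \<psi>)"
    unfolding mult_proj_adj[OF ctrl_carrier \<psi>]
    by (rule tr_mult_proj[OF _ mult_mat_vec_carrier[OF ctrl_carrier \<psi>]])
qed

lemma win_prob_add:
  assumes A: "A \<in> carrier_mat (N*d) (N*d)" and B: "B \<in> carrier_mat (N*d) (N*d)"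
    and P: "P0 \<in> carrier_mat (N*d) (N*d)" "P1 \<in> carrier_mat (N*d) (N*d)"
  shows "win_prob N d v q (A + B) Us P0 P1 = win_prob N d v q A Us P0 P1 + win_prob N d v q B Us P0 P1"
proof -
  have "tr (P * (C * (A + B) * adj C)) = tr (P * (C * A * adj C)) + tr (P * (C * B * adj C))"
    if P: "P \<in> carrier_mat (N*d) (N*d)" and C: "C \<in> carrier_mat (N*d) (N*d)" for P C
  proof -
    have CA: "C * A * adj C \<in> carrier_mat (N*d) (N*d)" and CB: "C * B * adj C \<in> carrier_mat (N*d) (N*d)"
      using A B C by auto
    have "C * (A + B) * adj C = C * A * adj C + C * B * adj C"
      using A B C by (simp add: mult_add_distrib_mat[OF C A B]
          add_mult_distrib_mat[OF mult_carrier_mat[OF C A] mult_carrier_mat[OF C B] adj_carrier[OF C]])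
    then show ?thesis
      using P CA CB by (simp add: mult_add_distrib_mat[OF P CA CB] tr_add[of _ "N*d"])
  qed
  then show ?thesis
    unfolding win_prob_def using P by (simp add: sum.distrib algebra_simps)
qed

lemma win_prob_smult:
  assumes A: "A \<in> carrier_mat (N*d) (N*d)"
    and P: "P0 \<in> carrier_mat (N*d) (N*d)" "P1 \<in> carrier_mat (N*d) (N*d)"
  shows "win_prob N d v q (of_real c \<cdot>\<^sub>m A) Us P0 P1 = c * win_prob N d v q A Us P0 P1"
proof -
  have "tr (P * (C * (of_real c \<cdot>\<^sub>m A) * adj C)) = of_real c * tr (P * (C * A * adj C))"
    if P: "P \<in> carrier_mat (N*d) (N*d)" and C: "C \<in> carrier_mat (N*d) (N*d)" for P C
  proof -
    have CA: "C * A * adj C \<in> carrier_mat (N*d) (N*d)" using A C by auto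
    have "C * (of_real c \<cdot>\<^sub>m A) * adj C = of_real c \<cdot>\<^sub>m (C * A * adj C)"
      using A C by (simp add: mult_smult_distrib[OF C A] mult_smult_assoc_mat[of _ "N*d" "N*d" _ "N*d"])
    then show ?thesis
      using P CA by (simp add: mult_smult_distrib[OF P CA] tr_smult[of _ "N*d"])
  qed
  then show ?thesis
    unfolding win_prob_def using P by (simp add: sum_distrib_left algebra_simps)
qed

lemma win_prob_proj_unitary_equiv:
  assumes \<psi>: "\<psi> \<in> carrier_vec (N*d)" and \<psi>': "\<psi>' \<in> carrier_vec (N*d)" and W: "unitary_mat (N*d) W"
    and P: "P0 \<in> carrier_mat (N*d) (N*d)" "P1 \<in> carrier_mat (N*d) (N*d)"
    and eq: "\<And>x. ctrl N d Us x *\<^sub>v \<psi> = W *\<^sub>v (ctrl N d Us' x *\<^sub>v \<psi>')"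
  shows "win_prob N d v q (proj \<psi>) Us P0 P1 =
    win_prob N d v q (proj \<psi>') Us' (adj W * P0 * W) (adj W * P1 * W)"
proof -
  have Wc: "W \<in> carrier_mat (N*d) (N*d)" using W by (rule unitary_carrier)
  have "quad_form P (ctrl N d Us x *\<^sub>v \<psi>) = quad_form (adj W * P * W) (ctrl N d Us' x *\<^sub>v \<psi>')"
    if "P \<in> carrier_mat (N*d) (N*d)" for P x
    unfolding eq by (rule quad_form_mult_mat_vec[OF Wc that mult_mat_vec_carrier[OF ctrl_carrier \<psi>']])
  moreover have "adj W * P0 * W \<in> carrier_mat (N*d) (N*d)" "adj W * P1 * W \<in> carrier_mat (N*d) (N*d)"
    using P Wc by auto
  ultimately show ?thesis
    using P by (simp add: win_prob_proj[OF \<psi>] win_prob_proj[OF \<psi>'] if_distrib[of "\<lambda>P. adj W * P * W"])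
qed

lemma win_prob_pure_reduction:
  assumes d: "0 < d" and \<psi>: "\<psi> \<in> carrier_vec (N*d)" and n\<psi>: "sq_norm (N*d) \<psi> = 1"
    and Us: "\<forall>j<N. \<forall>b. unitary_mat d (Us j b)" and P: "povm2 (N*d) P0 P1"
  obtains p T P0' P1' where "\<forall>i<N. p i \<ge> 0" and "(\<Sum>i<N. p i) = 1" and "\<forall>i<N. unitary_mat d (T i)"
    and "povm2 (N*d) P0' P1'"
    and "win_prob N d v q (proj \<psi>) Us P0 P1 =
      win_prob N d v q (proj (prod_state N d p (unit_vec d 0))) (\<lambda>i b. if b then T i else 1\<^sub>m d) P0' P1'"
proof -
  define p where "p i = sq_norm d (block d i \<psi>)" for i
  obtain W T where W: "unitary_mat (N*d) W" and T: "\<forall>i<N. unitary_mat d (T i)"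
    and eq: "\<And>x. ctrl N d Us x *\<^sub>v \<psi> = W *\<^sub>v (ctrl N d (\<lambda>i b. if b then T i else 1\<^sub>m d) x *\<^sub>v
           prod_state N d p (unit_vec d 0))"
    using controlled_state_canonical_form[OF d \<psi> Us] unfolding p_def by blast
  have "\<forall>i<N. p i \<ge> 0" by (simp add: p_def sq_norm_nonneg)
  moreover have "(\<Sum>i<N. p i) = 1" using n\<psi> by (simp add: p_def sq_norm_blocks)
  moreover have "povm2 (N*d) (adj W * P0 * W) (adj W * P1 * W)" using P W by (rule povm2_conj)
  moreover have "win_prob N d v q (proj \<psi>) Us P0 P1 =
      win_prob N d v q (proj (prod_state N d p (unit_vec d 0))) (\<lambda>i b. if b then T i else 1\<^sub>m d)
        (adj W * P0 * W) (adj W * P1 * W)"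
    using povm2_carrier[OF P] by (intro win_prob_proj_unitary_equiv[OF \<psi> _ W _ _ eq]) simp_all
  ultimately show ?thesis using that T by blast
qed

lemma psd_zero_diag:
  assumes P: "psd n A" and m: "m < n" and j: "j < n" and "Re (A $$ (m,m)) = 0"
  shows "A $$ (m,j) = 0" and "A $$ (j,m) = 0"
proof -
  show "A $$ (m,j) = 0" using psd_entry_bound[OF P m j] assms(4) by simp
  then show "A $$ (j,m) = 0" using psd_hermitian[OF P m j] by simp
qed

lemma quad_form_add_unit_vec:
  assumes A: "A \<in> carrier_mat n n" and w: "w \<in> carrier_vec n" and m: "m < n"
  shows "quad_form A (w + s \<cdot>\<^sub>v unit_vec n m) = quad_form A w + s * (\<Sum>i<n. cnj (w $ i) * A $$ (i,m))
    + cnj s * (A *\<^sub>v w) $ m + cnj s * s * A $$ (m,m)"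
proof -
  let ?w = "w + s \<cdot>\<^sub>v unit_vec n m"
  have w': "?w \<in> carrier_vec n" using w by simp
  have Aw': "(A *\<^sub>v ?w) $ i = (A *\<^sub>v w) $ i + A $$ (i,m) * s" if "i < n" for i
    unfolding index_mult_mat_vec_sum[OF A w' that] index_mult_mat_vec_sum[OF A w that]
    using w m by (simp add: distrib_left sum.distrib if_distrib[of "(*) _"] cong: if_cong)
  have "quad_form A ?w = (\<Sum>i<n. (cnj (w $ i) * (A *\<^sub>v w) $ i + s * (cnj (w $ i) * A $$ (i,m)))
      + (if i = m then cnj s * ((A *\<^sub>v w) $ i + A $$ (i,m) * s) else 0))"
    unfolding quad_form_def using w m by (intro sum.cong) (auto simp: Aw' algebra_simps)
  then show ?thesis
    using w m by (simp add: quad_form_def sum.distrib sum_distrib_left algebra_simps)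
qed

lemma psd_deflate:
  assumes P: "psd n A" and m: "m < n" and r: "A $$ (m,m) \<noteq> 0"
  shows "psd n (mat n n (\<lambda>(i,j). A $$ (i,j) - A $$ (i,m) * A $$ (m,j) / A $$ (m,m)))"
proof -
  define A' where "A' = mat n n (\<lambda>(i,j). A $$ (i,j) - A $$ (i,m) * A $$ (m,j) / A $$ (m,m))"
  have A: "A \<in> carrier_mat n n" using P by (rule psd_carrier)
  have A': "A' \<in> carrier_mat n n" by (simp add: A'_def)
  have "Im (quad_form A' w) = 0 \<and> Re (quad_form A' w) \<ge> 0" if w: "w \<in> carrier_vec n" for w
  proof -
    define a where "a = (A *\<^sub>v w) $ m"
    have ca: "(\<Sum>i<n. cnj (w $ i) * A $$ (i,m)) = cnj a"
      unfolding a_def index_mult_mat_vec_sum[OF A w m] cnj_sum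
      using psd_hermitian[OF P m] by (intro sum.cong) auto
    have "(A' *\<^sub>v w) $ i = (A *\<^sub>v w) $ i - A $$ (i,m) * a / A $$ (m,m)" if "i < n" for i
    proof -
      have "(A' *\<^sub>v w) $ i = (\<Sum>j<n. A $$ (i,j) * w $ j - A $$ (i,m) / A $$ (m,m) * (A $$ (m,j) * w $ j))"
        unfolding index_mult_mat_vec_sum[OF A' w that] using that
        by (intro sum.cong) (auto simp: A'_def algebra_simps)
      then show ?thesis
        unfolding a_def index_mult_mat_vec_sum[OF A w m] index_mult_mat_vec_sum[OF A w that]
        by (simp add: sum_subtractf sum_distrib_left[symmetric] sum_divide_distrib[symmetric])
    qed
    then have "quad_form A' w = quad_form A w - (\<Sum>i<n. cnj (w $ i) * A $$ (i,m)) * (a / A $$ (m,m))"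
      using w unfolding quad_form_def
      by (simp add: right_diff_distrib sum_subtractf sum_distrib_right sum_divide_distrib[symmetric] mult.assoc)
    also have "\<dots> = quad_form A (w + (- a / A $$ (m,m)) \<cdot>\<^sub>v unit_vec n m)"
    proof -
      have "cnj (A $$ (m,m)) = A $$ (m,m)"
        using psd_diag(1)[OF P m] by (simp add: complex_eq_iff)
      then show ?thesis
        unfolding quad_form_add_unit_vec[OF A w m] ca a_def[symmetric]
        using r by (simp add: field_simps)
    qed
    finally show ?thesis
      using psd_quad_form[OF P, of "w + (- a / A $$ (m,m)) \<cdot>\<^sub>v unit_vec n m"] w by simp
  qed
  then show ?thesis
    unfolding psd_iff_quad_form A'_def[symmetric] using A' by blast
qed

lemma proj_bound_of_unit_proj_bound:
  fixes L :: "complex mat \<Rightarrow> real"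
  assumes smult: "\<And>A c. A \<in> carrier_mat n n \<Longrightarrow> L (of_real c \<cdot>\<^sub>m A) = c * L A"
    and unit: "\<And>\<phi>. \<phi> \<in> carrier_vec n \<Longrightarrow> sq_norm n \<phi> = 1 \<Longrightarrow> L (proj \<phi>) \<le> M"
    and \<psi>: "\<psi> \<in> carrier_vec n"
  shows "L (proj \<psi>) \<le> M * sq_norm n \<psi>"
proof (cases "sq_norm n \<psi> = 0")
  case True
  then have "proj \<psi> = of_real 0 \<cdot>\<^sub>m proj \<psi>"
    using \<psi> by (intro eq_matI) (auto simp: proj_def sq_norm_eq_0_iff)
  then show ?thesis
    using smult[OF proj_carrier[OF \<psi>], of 0] True by simp
next
  case False
  define s where "s = sqrt (sq_norm n \<psi>)"
  have s: "s > 0" and ss: "sq_norm n \<psi> = s * s"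
    using False sq_norm_nonneg[of n \<psi>] by (simp_all add: s_def)
  define \<phi> where "\<phi> = of_real (1 / s) \<cdot>\<^sub>v \<psi>"
  have \<phi>: "\<phi> \<in> carrier_vec n" using \<psi> by (simp add: \<phi>_def)
  have "sq_norm n \<phi> = (1 / s)\<^sup>2 * (s * s)"
    using s by (simp add: \<phi>_def sq_norm_smult[OF \<psi>] ss norm_divide)
  then have "sq_norm n \<phi> = 1"
    using s by (simp add: power2_eq_square)
  moreover have "proj \<psi> = of_real (s * s) \<cdot>\<^sub>m proj \<phi>"
    using \<psi> s by (intro eq_matI) (auto simp: \<phi>_def proj_def field_simps)
  ultimately show ?thesis
    using smult[OF proj_carrier[OF \<phi>], of "s * s"] unit[OF \<phi>] s
    by (simp add: ss mult.commute mult_left_mono)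
qed

lemma psd_functional_le_trace:
  fixes L :: "complex mat \<Rightarrow> real"
  assumes add: "\<And>A B. A \<in> carrier_mat n n \<Longrightarrow> B \<in> carrier_mat n n \<Longrightarrow> L (A + B) = L A + L B"
    and smult: "\<And>A c. A \<in> carrier_mat n n \<Longrightarrow> L (of_real c \<cdot>\<^sub>m A) = c * L A"
    and unit: "\<And>\<psi>. \<psi> \<in> carrier_vec n \<Longrightarrow> sq_norm n \<psi> = 1 \<Longrightarrow> L (proj \<psi>) \<le> M"
    and \<rho>: "psd n \<rho>"
  shows "L \<rho> \<le> M * Re (tr \<rho>)"
proof -
  have proj: "L (proj \<psi>) \<le> M * sq_norm n \<psi>" if "\<psi> \<in> carrier_vec n" for \<psi>
    using smult unit that by (rule proj_bound_of_unit_proj_bound)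
  \<comment> \<open>peel off rank-one summands, clearing one row and column of \<open>\<rho>\<close> at a time\<close>
  have "\<forall>\<rho>. psd n \<rho> \<longrightarrow> (\<forall>i<n. \<forall>j<n. (i < m \<or> j < m) \<longrightarrow> \<rho> $$ (i,j) = 0) \<longrightarrow> L \<rho> \<le> M * Re (tr \<rho>)"
    if "m \<le> n" for m
    using that
  proof (induction m rule: inc_induct)
    case base
    show ?case
    proof (intro allI impI)
      fix \<rho> assume P: "psd n \<rho>" and Z: "\<forall>i<n. \<forall>j<n. (i < n \<or> j < n) \<longrightarrow> \<rho> $$ (i,j) = 0"
      have C: "\<rho> \<in> carrier_mat n n" using P by (rule psd_carrier)
      then have "\<rho> = of_real 0 \<cdot>\<^sub>m \<rho>" and "tr \<rho> = 0"
        using Z by (auto intro!: eq_matI simp: tr_def)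
      then show "L \<rho> \<le> M * Re (tr \<rho>)"
        using smult[OF C, of 0] by simp
    qed
  next
    case (step m)
    show ?case
    proof (intro allI impI)
      fix \<rho> assume P: "psd n \<rho>" and Z: "\<forall>i<n. \<forall>j<n. (i < m \<or> j < m) \<longrightarrow> \<rho> $$ (i,j) = 0"
      have m: "m < n" using step by simp
      show "L \<rho> \<le> M * Re (tr \<rho>)"
      proof (cases "Re (\<rho> $$ (m,m)) = 0")
        case True
        then have "\<forall>i<n. \<forall>j<n. (i < Suc m \<or> j < Suc m) \<longrightarrow> \<rho> $$ (i,j) = 0"
          using Z psd_zero_diag[OF P m] less_Suc_eq by auto
        then show ?thesis using step.IH P by blast
      next
        case False
        define t where "t = 1 / Re (\<rho> $$ (m,m))"
        have t: "t > 0" "\<rho> $$ (m,m) = of_real (1 / t)"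
          using False psd_diag[OF P m] by (auto simp: t_def complex_eq_iff)
        define c where "c = vec n (\<lambda>i. \<rho> $$ (i,m))"
        define \<rho>' where "\<rho>' = mat n n (\<lambda>(i,j). \<rho> $$ (i,j) - \<rho> $$ (i,m) * \<rho> $$ (m,j) / \<rho> $$ (m,m))"
        have C: "\<rho> \<in> carrier_mat n n" and C': "\<rho>' \<in> carrier_mat n n" and c: "c \<in> carrier_vec n"
          using psd_carrier[OF P] by (simp_all add: \<rho>'_def c_def)
        have dec: "\<rho> = \<rho>' + of_real t \<cdot>\<^sub>m proj c"
          using C t psd_hermitian[OF P m] by (intro eq_matI) (auto simp: \<rho>'_def c_def proj_def)
        have "\<forall>i<n. \<forall>j<n. (i < Suc m \<or> j < Suc m) \<longrightarrow> \<rho>' $$ (i,j) = 0"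
          using Z m t by (auto simp: \<rho>'_def less_Suc_eq)
        then have "L \<rho>' \<le> M * Re (tr \<rho>')"
          using step.IH psd_deflate[OF P m] t unfolding \<rho>'_def by auto
        then have "L \<rho>' + t * L (proj c) \<le> M * Re (tr \<rho>') + t * (M * sq_norm n c)"
          using proj[OF c] t by (intro add_mono mult_left_mono) auto
        moreover have "tr \<rho> = tr \<rho>' + of_real t * of_real (sq_norm n c)"
          using C' c by (subst dec) (simp add: tr_add[of _ n] tr_smult[OF proj_carrier[OF c]] tr_proj)
        moreover have "L \<rho> = L \<rho>' + t * L (proj c)"
          using C' c by (subst dec) (simp add: add smult)
        ultimately show ?thesis
          by (simp add: algebra_simps flip: of_real_mult)
      qed
    qed
  qed
  from this[of 0] \<rho> show ?thesis by simp
qed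

definition mat_continuous_on :: "'a::topological_space set \<Rightarrow> nat \<Rightarrow> nat \<Rightarrow> ('a \<Rightarrow> complex mat) \<Rightarrow> bool" where
  "mat_continuous_on S n m F \<longleftrightarrow>
     (\<forall>z\<in>S. F z \<in> carrier_mat n m) \<and> (\<forall>i<n. \<forall>j<m. continuous_on S (\<lambda>z. F z $$ (i,j)))"

lemma mat_continuous_on_carrier: "mat_continuous_on S n m F \<Longrightarrow> z \<in> S \<Longrightarrow> F z \<in> carrier_mat n m"
  unfolding mat_continuous_on_def by blast

lemma mat_continuous_on_entry:
  "mat_continuous_on S n m F \<Longrightarrow> i < n \<Longrightarrow> j < m \<Longrightarrow> continuous_on S (\<lambda>z. F z $$ (i,j))"
  unfolding mat_continuous_on_def by blast

lemma mat_continuous_on_mat: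
  "(\<And>i j. i < n \<Longrightarrow> j < m \<Longrightarrow> continuous_on S (\<lambda>z. f z (i,j))) \<Longrightarrow>
   mat_continuous_on S n m (\<lambda>z. mat n m (f z))"
  unfolding mat_continuous_on_def by simp

lemma mat_continuous_on_const: "A \<in> carrier_mat n m \<Longrightarrow> mat_continuous_on S n m (\<lambda>z. A)"
  unfolding mat_continuous_on_def by simp

lemma mat_continuous_on_add:
  assumes F: "mat_continuous_on S n m F" and G: "mat_continuous_on S n m G"
  shows "mat_continuous_on S n m (\<lambda>z. F z + G z)"
  unfolding mat_continuous_on_def
proof (intro conjI ballI allI impI)
  fix i j assume ij: "i < n" "j < m"
  have "continuous_on S (\<lambda>z. F z $$ (i,j) + G z $$ (i,j))"
    using mat_continuous_on_entry[OF F ij] mat_continuous_on_entry[OF G ij] by (rule continuous_on_add)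
  then show "continuous_on S (\<lambda>z. (F z + G z) $$ (i,j))"
    by (rule continuous_on_eq) (use ij in \<open>auto dest: mat_continuous_on_carrier[OF G]\<close>)
qed (use mat_continuous_on_carrier[OF F] mat_continuous_on_carrier[OF G] in simp)

lemma mat_continuous_on_mult:
  assumes F: "mat_continuous_on S n m F" and G: "mat_continuous_on S m l G"
  shows "mat_continuous_on S n l (\<lambda>z. F z * G z)"
  unfolding mat_continuous_on_def
proof (intro conjI ballI allI impI)
  fix z assume "z \<in> S"
  then show "F z * G z \<in> carrier_mat n l"
    using mult_carrier_mat[OF mat_continuous_on_carrier[OF F] mat_continuous_on_carrier[OF G]] by blast
next
  fix i j assume i: "i < n" and j: "j < l"
  have "continuous_on S (\<lambda>z. \<Sum>k<m. F z $$ (i,k) * G z $$ (k,j))"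
    by (intro continuous_on_sum continuous_on_mult mat_continuous_on_entry[OF F i]
        mat_continuous_on_entry[OF G _ j]) auto
  then show "continuous_on S (\<lambda>z. (F z * G z) $$ (i,j))"
    by (rule continuous_on_eq) (simp add: index_mult_mat_sum[OF mat_continuous_on_carrier[OF F]
        mat_continuous_on_carrier[OF G] i j] del: index_mult_mat)
qed

lemma mat_continuous_on_adj:
  assumes F: "mat_continuous_on S n m F"
  shows "mat_continuous_on S m n (\<lambda>z. adj (F z))"
  unfolding mat_continuous_on_def
proof (intro conjI ballI allI impI)
  fix z assume "z \<in> S"
  then show "adj (F z) \<in> carrier_mat m n"
    using adj_carrier[OF mat_continuous_on_carrier[OF F]] by blast
next
  fix i j assume i: "i < m" and j: "j < n"
  have "continuous_on S (\<lambda>z. cnj (F z $$ (j,i)))"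
    using mat_continuous_on_entry[OF F j i] by (rule continuous_on_cnj)
  then show "continuous_on S (\<lambda>z. adj (F z) $$ (i,j))"
    by (rule continuous_on_eq) (use i j in \<open>auto dest: mat_continuous_on_carrier[OF F]\<close>)
qed

lemma mat_continuous_on_proj:
  assumes \<psi>: "\<And>z. z \<in> S \<Longrightarrow> \<psi> z \<in> carrier_vec n"
    and cont: "\<And>i. i < n \<Longrightarrow> continuous_on S (\<lambda>z. \<psi> z $ i)"
  shows "mat_continuous_on S n n (\<lambda>z. proj (\<psi> z))"
  unfolding mat_continuous_on_def
proof (intro conjI ballI allI impI)
  fix i j assume i: "i < n" and j: "j < n"
  have "continuous_on S (\<lambda>z. \<psi> z $ i * cnj (\<psi> z $ j))"
    by (intro continuous_on_mult continuous_on_cnj cont i j)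
  then show "continuous_on S (\<lambda>z. proj (\<psi> z) $$ (i,j))"
    by (rule continuous_on_eq) (use i j in \<open>auto dest: \<psi> simp: proj_def\<close>)
qed (use \<psi> in simp)

lemma mat_continuous_on_ctrl:
  assumes Us: "\<And>i b. i < N \<Longrightarrow> mat_continuous_on S d d (\<lambda>z. Us z i b)"
  shows "mat_continuous_on S (N*d) (N*d) (\<lambda>z. ctrl N d (Us z) x)"
  unfolding mat_continuous_on_def
proof (intro conjI ballI allI impI)
  fix r c assume r: "r < N*d" and c: "c < N*d"
  have "continuous_on S (\<lambda>z. if r div d = c div d then Us z (r div d) (x ! (r div d)) $$ (r mod d, c mod d) else 0)"
    using block_index_decomp[OF r] block_index_decomp[OF c]
    by (cases "r div d = c div d") (simp_all add: mat_continuous_on_entry[OF Us])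
  then show "continuous_on S (\<lambda>z. ctrl N d (Us z) x $$ (r,c))"
    by (rule continuous_on_eq) (use r c in \<open>simp add: ctrl_def\<close>)
qed simp

lemma continuous_on_tr:
  assumes F: "mat_continuous_on S n n F"
  shows "continuous_on S (\<lambda>z. tr (F z))"
proof -
  have "continuous_on S (\<lambda>z. \<Sum>i<n. F z $$ (i,i))"
    by (intro continuous_on_sum mat_continuous_on_entry[OF F]) auto
  then show ?thesis
    by (rule continuous_on_eq) (auto dest: mat_continuous_on_carrier[OF F] simp: tr_def)
qed

lemma continuous_on_quad_form:
  assumes F: "mat_continuous_on S n n F" and w: "w \<in> carrier_vec n"
  shows "continuous_on S (\<lambda>z. quad_form (F z) w)"
proof -
  have "continuous_on S (\<lambda>z. \<Sum>i<n. cnj (w $ i) * (\<Sum>j<n. F z $$ (i,j) * w $ j))"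
    by (intro continuous_on_sum continuous_on_mult continuous_on_const mat_continuous_on_entry[OF F]) auto
  then show ?thesis
    by (rule continuous_on_eq) (use w in \<open>simp add: quad_form_def index_mult_mat_vec_sum[OF
        mat_continuous_on_carrier[OF F] w] del: index_mult_mat_vec\<close>)
qed

lemma continuous_on_win_prob:
  assumes \<rho>: "mat_continuous_on S (N*d) (N*d) \<rho>"
    and Us: "\<And>i b. i < N \<Longrightarrow> mat_continuous_on S d d (\<lambda>z. Us z i b)"
    and P0: "mat_continuous_on S (N*d) (N*d) P0" and P1: "mat_continuous_on S (N*d) (N*d) P1"
  shows "continuous_on S (\<lambda>z. win_prob N d v q (\<rho> z) (Us z) (P0 z) (P1 z))"
proof -
  have "continuous_on S (\<lambda>z. tr (P z * (ctrl N d (Us z) x * \<rho> z * adj (ctrl N d (Us z) x))))"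
    if "mat_continuous_on S (N*d) (N*d) P" for P x
    by (intro continuous_on_tr[where n="N*d"] mat_continuous_on_mult[where m="N*d"]
        mat_continuous_on_adj mat_continuous_on_ctrl that \<rho> Us)
  then have "continuous_on S (\<lambda>z. tr ((if v x then P1 z else P0 z) *
      (ctrl N d (Us z) x * \<rho> z * adj (ctrl N d (Us z) x))))" for x
    using P0 P1 by (cases "v x") simp_all
  then show ?thesis
    unfolding win_prob_def by (intro continuous_on_Re continuous_on_sum continuous_on_mult continuous_on_const)
qed

lemma closed_Collect_const_imp: "(Q \<Longrightarrow> closed {z. P z}) \<Longrightarrow> closed {z. Q \<longrightarrow> P z}"
  by (cases Q) simp_all

lemma closed_mat_eq:
  assumes F: "mat_continuous_on UNIV n m F" and G: "mat_continuous_on UNIV n m G"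
  shows "closed {z. F z = G z}"
proof -
  have "F z = G z \<longleftrightarrow> (\<forall>i j. i < n \<longrightarrow> j < m \<longrightarrow> F z $$ (i,j) = G z $$ (i,j))" for z
    using mat_continuous_on_carrier[OF F UNIV_I, of z] mat_continuous_on_carrier[OF G UNIV_I, of z]
    by (auto intro!: eq_matI)
  moreover have "closed {z. \<forall>i j. i < n \<longrightarrow> j < m \<longrightarrow> F z $$ (i,j) = G z $$ (i,j)}"
    by (intro closed_Collect_all closed_Collect_const_imp closed_Collect_eq
        mat_continuous_on_entry[OF F] mat_continuous_on_entry[OF G])
  ultimately show ?thesis by simp
qed

lemma closed_psd:
  assumes F: "mat_continuous_on UNIV n n F"
  shows "closed {z. psd n (F z)}"
proof -
  have "psd n (F z) \<longleftrightarrow>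
      (\<forall>w. w \<in> carrier_vec n \<longrightarrow> Im (quad_form (F z) w) = 0 \<and> Re (quad_form (F z) w) \<ge> 0)" for z
    using mat_continuous_on_carrier[OF F UNIV_I, of z] unfolding psd_iff_quad_form by blast
  moreover have "closed {z. \<forall>w. w \<in> carrier_vec n \<longrightarrow>
      Im (quad_form (F z) w) = 0 \<and> Re (quad_form (F z) w) \<ge> 0}"
    by (intro closed_Collect_all closed_Collect_const_imp closed_Collect_conj closed_Collect_eq
        closed_Collect_le continuous_on_Im continuous_on_Re continuous_on_quad_form[OF F] continuous_on_const)
  ultimately show ?thesis by simp
qed

lemma closed_unitary:
  assumes F: "mat_continuous_on UNIV d d F"
  shows "closed {z. unitary_mat d (F z)}"
proof -
  have "{z. unitary_mat d (F z)} = {z. adj (F z) * F z = 1\<^sub>m d} \<inter> {z. F z * adj (F z) = 1\<^sub>m d}"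
    using mat_continuous_on_carrier[OF F UNIV_I] unfolding unitary_mat_def by blast
  moreover have "closed {z. adj (F z) * F z = 1\<^sub>m d}" "closed {z. F z * adj (F z) = 1\<^sub>m d}"
    by (intro closed_mat_eq[where n=d and m=d] mat_continuous_on_mult[where m=d] mat_continuous_on_adj
        mat_continuous_on_const F one_carrier_mat)+
  ultimately show ?thesis by (simp add: closed_Int)
qed

lemma closed_povm2:
  assumes F: "mat_continuous_on UNIV n n F" and G: "mat_continuous_on UNIV n n G"
  shows "closed {z. povm2 n (F z) (G z)}"
proof -
  have "{z. povm2 n (F z) (G z)} = {z. psd n (F z)} \<inter> {z. psd n (G z)} \<inter> {z. F z + G z = 1\<^sub>m n}"
    unfolding povm2_def by blast
  moreover have "closed {z. F z + G z = 1\<^sub>m n}"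
    by (intro closed_mat_eq[where n=n and m=n] mat_continuous_on_add mat_continuous_on_const F G
        one_carrier_mat)
  ultimately show ?thesis using closed_psd[OF F] closed_psd[OF G] by (simp add: closed_Int)
qed

lemma compact_fun_box:
  assumes "compact K"
  shows "compact {f :: 'a \<Rightarrow> 'b::topological_space. \<forall>i. f i \<in> K}"
proof -
  have "{f :: 'a \<Rightarrow> 'b. \<forall>i. f i \<in> K} = PiE UNIV (\<lambda>_. K)"
    by (auto simp: PiE_UNIV_domain)
  moreover have "compactin (product_topology (\<lambda>_. euclidean) UNIV) (PiE UNIV (\<lambda>_::'a. K))"
    using assms by (simp add: compactin_PiE)
  ultimately show ?thesis
    by (simp add: euclidean_product_topology)
qed

type_synonym strategy_coords =
  "(nat \<Rightarrow> real) \<times> (nat \<Rightarrow> nat \<times> nat \<Rightarrow> complex) \<times> (nat \<times> nat \<Rightarrow> complex) \<times> (nat \<times> nat \<Rightarrow> complex)"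

definition canonical_value ::
    "nat \<Rightarrow> nat \<Rightarrow> (bool list \<Rightarrow> bool) \<Rightarrow> (bool list \<Rightarrow> real) \<Rightarrow> strategy_coords \<Rightarrow> real" where
  "canonical_value N d v q z = (case z of (p, u, e0, e1) \<Rightarrow>
     win_prob N d v q (proj (prod_state N d p (unit_vec d 0))) (\<lambda>i b. if b then mat d d (u i) else 1\<^sub>m d)
       (mat (N*d) (N*d) e0) (mat (N*d) (N*d) e1))"

text \<open>The box constraints are redundant on the coordinates that are actually read, but they
  make the set compact in the product topology.\<close>
definition canonical_strategies :: "nat \<Rightarrow> nat \<Rightarrow> strategy_coords set" where
  "canonical_strategies N d = {(p, u, e0, e1).
     (\<forall>i. p i \<in> cball 0 1) \<and> (\<forall>i k. u i k \<in> cball 0 1) \<and> (\<forall>k. e0 k \<in> cball 0 1) \<and> (\<forall>k. e1 k \<in> cball 0 1) \<and>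
     (\<forall>i<N. p i \<ge> 0) \<and> (\<Sum>i<N. p i) = 1 \<and> (\<forall>i<N. unitary_mat d (mat d d (u i))) \<and>
     povm2 (N*d) (mat (N*d) (N*d) e0) (mat (N*d) (N*d) e1)}"

lemma continuous_on_strategy_coords:
  "continuous_on S (\<lambda>z::strategy_coords. fst z i)"
  "continuous_on S (\<lambda>z::strategy_coords. fst (snd z) i k)"
  "continuous_on S (\<lambda>z::strategy_coords. fst (snd (snd z)) k)"
  "continuous_on S (\<lambda>z::strategy_coords. snd (snd (snd z)) k)"
proof -
  note coord = continuous_on_product_then_coordinatewise
  show "continuous_on S (\<lambda>z::strategy_coords. fst z i)"
    by (rule coord[OF continuous_on_fst[OF continuous_on_id]])
  show "continuous_on S (\<lambda>z::strategy_coords. fst (snd z) i k)"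
    by (rule coord[OF coord[OF continuous_on_fst[OF continuous_on_snd[OF continuous_on_id]]]])
  show "continuous_on S (\<lambda>z::strategy_coords. fst (snd (snd z)) k)"
    by (rule coord[OF continuous_on_fst[OF continuous_on_snd[OF continuous_on_snd[OF continuous_on_id]]]])
  show "continuous_on S (\<lambda>z::strategy_coords. snd (snd (snd z)) k)"
    by (rule coord[OF continuous_on_snd[OF continuous_on_snd[OF continuous_on_snd[OF continuous_on_id]]]])
qed

lemma continuous_on_canonical_value: "continuous_on S (canonical_value N d v q)"
proof -
  note coords = continuous_on_strategy_coords
  have "continuous_on S (\<lambda>z. win_prob N d v q (proj (prod_state N d (fst z) (unit_vec d 0)))
      (\<lambda>i b. if b then mat d d (fst (snd z) i) else 1\<^sub>m d)
      (mat (N*d) (N*d) (fst (snd (snd z)))) (mat (N*d) (N*d) (snd (snd (snd z)))))"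
  proof (rule continuous_on_win_prob)
    show "mat_continuous_on S (N*d) (N*d) (\<lambda>z. proj (prod_state N d (fst z) (unit_vec d 0)))"
    proof (rule mat_continuous_on_proj)
      fix r assume r: "r < N*d"
      have "continuous_on S (\<lambda>z::strategy_coords.
          of_real (sqrt (fst z (r div d))) * (unit_vec d 0 :: complex Matrix.vec) $ (r mod d))"
        by (intro continuous_intros coords)
      then show "continuous_on S (\<lambda>z. prod_state N d (fst z) (unit_vec d 0) $ r)"
        by (rule continuous_on_eq) (simp add: prod_state_def r)
    qed (simp add: prod_state_def)
    show "mat_continuous_on S d d (\<lambda>z. if b then mat d d (fst (snd z) i) else 1\<^sub>m d)" for i b
      by (cases b) (simp_all add: mat_continuous_on_mat mat_continuous_on_const coords)
  qed (simp_all add: mat_continuous_on_mat coords)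
  then show ?thesis
    by (simp add: canonical_value_def case_prod_beta)
qed

lemma compact_cball_complex: "compact (cball (0::complex) r)"
proof -
  define K where "K = (\<lambda>x. complex_of_real (fst x) + \<i> * complex_of_real (snd x)) ` ({-r..r} \<times> {-r..r})"
  have "compact K"
    unfolding K_def by (intro compact_continuous_image compact_Times compact_Icc continuous_intros)
  moreover have "cball (0::complex) r \<subseteq> K"
  proof
    fix z :: complex assume "z \<in> cball 0 r"
    then have "Re z \<in> {-r..r}" "Im z \<in> {-r..r}"
      using abs_Re_le_cmod[of z] abs_Im_le_cmod[of z] by auto
    moreover have "z = complex_of_real (Re z) + \<i> * complex_of_real (Im z)"
      by (simp add: complex_eq_iff)
    ultimately show "z \<in> K" unfolding K_def by (auto intro!: image_eqI[of _ _ "(Re z, Im z)"])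
  qed
  then have "cball 0 r = K \<inter> cball 0 r" by blast
  ultimately show ?thesis
    by (metis closed_cball compact_Int_closed)
qed

lemma compact_canonical_strategies: "compact (canonical_strategies N d)"
proof -
  note coords = continuous_on_strategy_coords
  define B where "B = {f :: nat \<times> nat \<Rightarrow> complex. \<forall>k. f k \<in> cball 0 1}"
  define C where "C = {z :: strategy_coords. (\<forall>i<N. fst z i \<ge> 0) \<and> (\<Sum>i<N. fst z i) = 1 \<and>
      (\<forall>i<N. unitary_mat d (mat d d (fst (snd z) i))) \<and>
      povm2 (N*d) (mat (N*d) (N*d) (fst (snd (snd z)))) (mat (N*d) (N*d) (snd (snd (snd z))))}"
  have "compact ({p :: nat \<Rightarrow> real. \<forall>i. p i \<in> cball 0 1} \<times> {u. \<forall>i. u i \<in> B} \<times> B \<times> B)"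
    unfolding B_def by (intro compact_Times compact_fun_box compact_cball compact_cball_complex)
  moreover have "closed C"
    unfolding C_def
    by (intro closed_Collect_conj closed_Collect_all closed_Collect_const_imp closed_Collect_le
        closed_Collect_eq closed_unitary closed_povm2 mat_continuous_on_mat continuous_on_sum
        continuous_on_const coords)
  ultimately have "compact (({p. \<forall>i. p i \<in> cball 0 1} \<times> {u. \<forall>i. u i \<in> B} \<times> B \<times> B) \<inter> C)"
    by (rule compact_Int_closed)
  also have "\<dots> = canonical_strategies N d"
    unfolding canonical_strategies_def B_def C_def by auto
  finally show ?thesis .
qed

lemma ctrl_cong: "(\<And>i b. i < N \<Longrightarrow> Us i b = Us' i b) \<Longrightarrow> ctrl N d Us x = ctrl N d Us' x"
  unfolding ctrl_eq_block_diag by (rule block_diag_cong) simp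

lemma prod_state_cong: "(\<And>i. i < N \<Longrightarrow> p i = p' i) \<Longrightarrow> prod_state N d p \<chi> = prod_state N d p' \<chi>"
  unfolding prod_state_def by (rule eq_vecI) (auto dest: block_index_decomp)

lemma canonical_strategy_exists:
  assumes p: "\<forall>i<N. p i \<ge> 0" "(\<Sum>i<N. p i) = 1" and T: "\<forall>i<N. unitary_mat d (T i)"
    and P: "povm2 (N*d) P0 P1"
  shows "\<exists>z\<in>canonical_strategies N d. canonical_value N d v q z =
    win_prob N d v q (proj (prod_state N d p (unit_vec d 0))) (\<lambda>i b. if b then T i else 1\<^sub>m d) P0 P1"
proof -
  define p' where "p' i = (if i < N then p i else 0)" for i
  define u where "u i = (\<lambda>(a,b). if i < N \<and> a < d \<and> b < d then T i $$ (a,b) else 0)" for i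
  define e0 e1 where "e0 = (\<lambda>(a,b). if a < N*d \<and> b < N*d then P0 $$ (a,b) else 0)"
    and "e1 = (\<lambda>(a,b). if a < N*d \<and> b < N*d then P1 $$ (a,b) else 0)"
  have PC: "P0 \<in> carrier_mat (N*d) (N*d)" "P1 \<in> carrier_mat (N*d) (N*d)"
    using povm2_carrier[OF P] by auto
  have TC: "T i \<in> carrier_mat d d" if "i < N" for i
    using T that by (simp add: unitary_carrier)
  have uT: "mat d d (u i) = T i" if "i < N" for i
    using TC[OF that] that by (intro eq_matI) (auto simp: u_def)
  have eP: "mat (N*d) (N*d) e0 = P0" "mat (N*d) (N*d) e1 = P1"
    using PC by (auto intro!: eq_matI simp: e0_def e1_def)
  have "p i \<le> 1" if "i < N" for i
    using p that member_le_sum[of i "{..<N}" p] by auto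
  then have "(p', u, e0, e1) \<in> canonical_strategies N d"
    using p T P uT eP unitary_entry_bound[of d "T _"] povm2_entry_bound[OF P]
    by (auto simp: canonical_strategies_def p'_def u_def e0_def e1_def split: if_splits)
  moreover have "prod_state N d p' (unit_vec d 0) = prod_state N d p (unit_vec d 0)"
    by (rule prod_state_cong) (simp add: p'_def)
  moreover have "ctrl N d (\<lambda>i b. if b then mat d d (u i) else 1\<^sub>m d) x =
      ctrl N d (\<lambda>i b. if b then T i else 1\<^sub>m d) x" for x
    by (rule ctrl_cong) (simp add: uT)
  ultimately show ?thesis
    unfolding canonical_value_def
    by (intro bexI[of _ "(p', u, e0, e1)"]) (simp_all only: prod.case eP win_prob_def)
qed

lemma sq_norm_prod_state:
  assumes "\<forall>i<N. p i \<ge> 0" and "\<chi> \<in> carrier_vec d" and "sq_norm d \<chi> = 1"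
  shows "sq_norm (N*d) (prod_state N d p \<chi>) = (\<Sum>i<N. p i)"
  unfolding sq_norm_blocks using assms by (simp add: block_prod_state sq_norm_smult)

lemma win_prob_le_canonical_bound:
  assumes d: "0 < d"
    and bound: "\<And>p T P0 P1. \<forall>i<N. p i \<ge> 0 \<Longrightarrow> (\<Sum>i<N. p i) = 1 \<Longrightarrow> \<forall>i<N. unitary_mat d (T i) \<Longrightarrow>
      povm2 (N*d) P0 P1 \<Longrightarrow>
      win_prob N d v q (proj (prod_state N d p (unit_vec d 0))) (\<lambda>i b. if b then T i else 1\<^sub>m d) P0 P1 \<le> M"
    and \<rho>: "psd (N*d) \<rho>" and Us: "\<forall>j<N. \<forall>b. unitary_mat d (Us j b)" and P: "povm2 (N*d) P0 P1"
  shows "win_prob N d v q \<rho> Us P0 P1 \<le> M * Re (tr \<rho>)"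
proof (rule psd_functional_le_trace[OF _ _ _ \<rho>])
  have PC: "P0 \<in> carrier_mat (N*d) (N*d)" "P1 \<in> carrier_mat (N*d) (N*d)"
    using povm2_carrier[OF P] by auto
  show "win_prob N d v q (A + B) Us P0 P1 = win_prob N d v q A Us P0 P1 + win_prob N d v q B Us P0 P1"
    if "A \<in> carrier_mat (N*d) (N*d)" "B \<in> carrier_mat (N*d) (N*d)" for A B
    using that PC by (rule win_prob_add)
  show "win_prob N d v q (of_real c \<cdot>\<^sub>m A) Us P0 P1 = c * win_prob N d v q A Us P0 P1"
    if "A \<in> carrier_mat (N*d) (N*d)" for A c
    using that PC by (rule win_prob_smult)
  show "win_prob N d v q (proj \<psi>) Us P0 P1 \<le> M"
    if "\<psi> \<in> carrier_vec (N*d)" "sq_norm (N*d) \<psi> = 1" for \<psi>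
    using win_prob_pure_reduction[OF d that Us P] bound by metis
qed

lemma P_W_le:
  assumes "\<And>P0 P1. povm2 (N*d) P0 P1 \<Longrightarrow> win_prob N d v q \<rho> Us P0 P1 \<le> M"
  shows "P_W N d v q \<rho> Us \<le> M"
  unfolding P_W_def using assms povm2_trivial by (intro cSup_least) blast+

lemma win_prob_le_P_W:
  assumes "povm2 (N*d) P0 P1" and "\<And>P0 P1. povm2 (N*d) P0 P1 \<Longrightarrow> win_prob N d v q \<rho> Us P0 P1 \<le> M"
  shows "win_prob N d v q \<rho> Us P0 P1 \<le> P_W N d v q \<rho> Us"
  unfolding P_W_def using assms by (intro cSup_upper bdd_aboveI[of _ M]) blast+

theorem lemma2:
  fixes N d :: nat and v :: "bool list \<Rightarrow> bool" and q :: "bool list \<Rightarrow> real"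
  assumes "N \<ge> 1" and "d \<ge> 1"
    and "\<forall>x\<in>bitstrings N. q x \<ge> 0"
    and "(\<Sum>x\<in>bitstrings N. q x) = 1"
  shows "\<exists>p \<chi> U.
     (\<forall>i<N. p i \<ge> 0) \<and> (\<Sum>i<N. p i) = 1 \<and>
     \<chi> \<in> carrier_vec d \<and> (\<Sum>a<d. (cmod (\<chi> $ a))\<^sup>2) = 1 \<and>
     (\<forall>i<N. unitary_mat d (U i)) \<and>
     (\<forall>\<rho> Us. density (N*d) \<rho> \<and> (\<forall>j<N. \<forall>b. unitary_mat d (Us j b)) \<longrightarrow>
        P_W N d v q \<rho> Us \<le>
        P_W N d v q (proj (prod_state N d p \<chi>)) (\<lambda>i b. if b then U i else 1\<^sub>m d))"
proof -
  have d: "0 < d" using assms(2) by simp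
  let ?S = "canonical_strategies N d" and ?V = "canonical_value N d v q"
  have "?S \<noteq> {}"
    using canonical_strategy_exists[of N "\<lambda>i. of_bool (i = 0)" d "\<lambda>_. 1\<^sub>m d", OF _ _ _ povm2_trivial]
      assms(1) unitary_one by auto
  then obtain z where z: "z \<in> ?S" and z_max: "\<And>y. y \<in> ?S \<Longrightarrow> ?V y \<le> ?V z"
    using continuous_attains_sup[OF compact_canonical_strategies _ continuous_on_canonical_value] by blast
  obtain p u e0 e1 where z_def: "z = (p, u, e0, e1)" by (cases z)
  let ?\<chi> = "unit_vec d 0 :: complex Matrix.vec" and ?U = "\<lambda>i. mat d d (u i)"
  let ?\<rho> = "proj (prod_state N d p ?\<chi>)" and ?Us = "\<lambda>i b. if b then ?U i else 1\<^sub>m d"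
  have p: "\<forall>i<N. p i \<ge> 0" "(\<Sum>i<N. p i) = 1" and U: "\<forall>i<N. unitary_mat d (?U i)"
    and P: "povm2 (N*d) (mat (N*d) (N*d) e0) (mat (N*d) (N*d) e1)"
    using z by (simp_all add: z_def canonical_strategies_def)
  have bound: "win_prob N d v q \<rho> Us P0 P1 \<le> ?V z * Re (tr \<rho>)"
    if "psd (N*d) \<rho>" "\<forall>j<N. \<forall>b. unitary_mat d (Us j b)" "povm2 (N*d) P0 P1" for \<rho> Us P0 P1
  proof (rule win_prob_le_canonical_bound[OF d _ that])
    fix p' :: "nat \<Rightarrow> real" and T Q0 Q1
    assume "\<forall>i<N. p' i \<ge> 0" "(\<Sum>i<N. p' i) = 1" "\<forall>i<N. unitary_mat d (T i)" "povm2 (N*d) Q0 Q1"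
    then obtain y where y: "y \<in> ?S"
      and "?V y = win_prob N d v q (proj (prod_state N d p' ?\<chi>)) (\<lambda>i b. if b then T i else 1\<^sub>m d) Q0 Q1"
      by (blast dest: canonical_strategy_exists[where v=v and q=q])
    with z_max[OF y]
    show "win_prob N d v q (proj (prod_state N d p' ?\<chi>)) (\<lambda>i b. if b then T i else 1\<^sub>m d) Q0 Q1 \<le> ?V z"
      by simp
  qed
  have Us: "\<forall>j<N. \<forall>b. unitary_mat d (?Us j b)"
    using U unitary_one by simp
  have "Re (tr ?\<rho>) = 1"
    by (simp add: tr_proj[OF prod_state_carrier] sq_norm_prod_state[OF p(1) unit_vec_carrier]
        sq_norm_unit_vec[OF d] p(2))
  then have canonical_bound: "win_prob N d v q ?\<rho> ?Us P0 P1 \<le> ?V z" if "povm2 (N*d) P0 P1" for P0 P1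
    using bound[OF psd_proj[OF prod_state_carrier[of N d p ?\<chi>]] Us that] by simp
  have "?V z = win_prob N d v q ?\<rho> ?Us (mat (N*d) (N*d) e0) (mat (N*d) (N*d) e1)"
    by (simp add: z_def canonical_value_def)
  also have "\<dots> \<le> P_W N d v q ?\<rho> ?Us"
    using P canonical_bound by (rule win_prob_le_P_W)
  finally have "?V z \<le> P_W N d v q ?\<rho> ?Us" .
  moreover have "P_W N d v q \<rho> Us \<le> ?V z"
    if "density (N*d) \<rho>" "\<forall>j<N. \<forall>b. unitary_mat d (Us j b)" for \<rho> Us
    using bound[of \<rho> Us] that by (intro P_W_le) (simp add: density_def)
  ultimately have "\<forall>\<rho> Us. density (N*d) \<rho> \<and> (\<forall>j<N. \<forall>b. unitary_mat d (Us j b)) \<longrightarrow>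
      P_W N d v q \<rho> Us \<le> P_W N d v q ?\<rho> ?Us"
    by (meson order_trans)
  then show ?thesis
    using p U sq_norm_unit_vec[OF d, unfolded sq_norm_def]
    by (intro exI[of _ p] exI[of _ ?\<chi>] exI[of _ ?U]) simp
qed

end
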